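(* For a linear-non-linear adjunction $\mathcal F\dashv\mathcal U$ and objects $X,J$ of $\mathscr C$, the functor $\Sigma_{(X,J)}:LS(\mathscr C)_{X\times J}\to LS(\mathscr C)_X$ is left adjoint to the reindexing functor $\pi_1^*:LS(\mathscr C)_X\to LS(\mathscr C)_{X\times J}$ along $\pi_1:X\times J\to X$, with unit $\nu_{(X\times J,A)}:=(\mathrm{id}_{X\times J},(m^{-1}_{X,J}\otimes\mathrm{id}_A);(\mathbf w_X\otimes\mathrm{id}_{\mathcal F(J)\otimes A})):(X\times J,A)\to(X\times J,\mathcal F(J)\otimes A)$ and counit $\mu_{(X,A)}:=(\mathrm{id}_X,\mathbf w_X\otimes\mathbf w_J\otimes\mathrm{id}_A):(X,\mathcal F(J)\otimes A)\to(X,A)$.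
   Context: Composition is diagrammatic; monoidal categories are strict. A linear-non-linear adjunction is a symmetric monoidal adjunction $\mathcal F\dashv\mathcal U$, $\mathcal F:\mathscr C\to\mathcal L$, between a cartesian $(\mathscr C,\times,I)$ and a symmetric monoidal $(\mathcal L,\otimes,1)$ (symmetry $\sigma$), with $\mathcal F$ strong monoidal via isomorphisms $m_{X,Y}:\mathcal F(X)\otimes\mathcal F(Y)\to\mathcal F(X\times Y)$, $m_1:1\to\mathcal F(I)$. $\mathbf c_X:=\mathcal F(\Delta_X);m_{X,X}^{-1}$, $\mathbf w_X:=\mathcal F(t_X);m_1^{-1}$ ($t_X:X\to I$ terminal). $LS(\mathscr C)$: objects $(X,A)$ with $X\in\mathscr C$, $A\in\mathcal L$; morphisms $(f,u):(X,A)\to(Y,B)$ with $f:X\to Y$, $u:\mathcal F(X)\otimes A\to B$; composition $(f,u);(g,v)=(f;g,(\mathbf c_X\otimes\mathrm{id}_A);(\mathcal F(f)\otimes u);v)$; identity $(\mathrm{id}_X,\mathbf w_X\otimes\mathrm{id}_A)$. The fibre $LS(\mathscr C)_X$ has objects $(X,A)$ and morphisms $(\mathrm{id}_X,u)$. For $f:X'\to X$, the reindexing $f^*:LS(\mathscr C)_X\to LS(\mathscr C)_{X'}$ is $(X,B)\mapsto(X',B)$, $(\mathrm{id}_X,v)\mapsto(\mathrm{id}_{X'},(\mathcal F(f)\otimes\mathrm{id}_B);v)$. $\Sigma_{(X,J)}$: on objects $(X\times J,A)\mapsto(X,\mathcal F(J)\otimes A)$; on $(\mathrm{id}_{X\times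 J},u):(X\times J,A)\to(X\times J,B)$ it gives $(\mathrm{id}_X,(\mathrm{id}_{\mathcal F(X)}\otimes\mathbf c_J\otimes\mathrm{id}_A);(\sigma_{\mathcal F(X),\mathcal F(J)}\otimes\mathrm{id}_{\mathcal F(J)\otimes A});(\mathrm{id}_{\mathcal F(J)}\otimes((m_{X,J}\otimes\mathrm{id}_A);u)))$. *)

theory Defs
  imports Main
begin

text \<open>Hom-sets are given explicitly; composition C_comp f g means "f then g".\<close>

record ('x, 'f, 'l, 'g) lnl_data =
  C_hom   :: "'x \<Rightarrow> 'x \<Rightarrow> 'f set"
  C_comp  :: "'f \<Rightarrow> 'f \<Rightarrow> 'f"
  C_id    :: "'x \<Rightarrow> 'f"
  C_prod  :: "'x \<Rightarrow> 'x \<Rightarrow> 'x"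
  C_p1    :: "'x \<Rightarrow> 'x \<Rightarrow> 'f"
  C_p2    :: "'x \<Rightarrow> 'x \<Rightarrow> 'f"
  C_pair  :: "'f \<Rightarrow> 'f \<Rightarrow> 'f"
  C_term  :: "'x"
  C_bang  :: "'x \<Rightarrow> 'f"
  L_hom   :: "'l \<Rightarrow> 'l \<Rightarrow> 'g set"
  L_comp  :: "'g \<Rightarrow> 'g \<Rightarrow> 'g"
  L_id    :: "'l \<Rightarrow> 'g"
  L_tens  :: "'l \<Rightarrow> 'l \<Rightarrow> 'l"
  L_tensm :: "'g \<Rightarrow> 'g \<Rightarrow> 'g"
  L_unit  :: "'l"
  L_sym   :: "'l \<Rightarrow> 'l \<Rightarrow> 'g"
  F_ob    :: "'x \<Rightarrow> 'l"
  F_mor   :: "'f \<Rightarrow> 'g"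
  F_m     :: "'x \<Rightarrow> 'x \<Rightarrow> 'g"
  F_minv  :: "'x \<Rightarrow> 'x \<Rightarrow> 'g"
  F_m1    :: "'g"
  F_m1inv :: "'g"
  U_ob    :: "'l \<Rightarrow> 'x"
  U_mor   :: "'g \<Rightarrow> 'f"
  U_n     :: "'l \<Rightarrow> 'l \<Rightarrow> 'f"
  U_n1    :: "'f"
  adj_eta :: "'x \<Rightarrow> 'f"
  adj_eps :: "'l \<Rightarrow> 'g"

definition C_prodm :: "('x, 'f, 'l, 'g, 'z) lnl_data_scheme \<Rightarrow> 'x \<Rightarrow> 'x \<Rightarrow> 'f \<Rightarrow> 'f \<Rightarrow> 'f" where
  "C_prodm D X Y f g = C_pair D (C_comp D (C_p1 D X Y) f) (C_comp D (C_p2 D X Y) g)"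

definition C_swap :: "('x, 'f, 'l, 'g, 'z) lnl_data_scheme \<Rightarrow> 'x \<Rightarrow> 'x \<Rightarrow> 'f" where
  "C_swap D X Y = C_pair D (C_p2 D X Y) (C_p1 D X Y)"

definition C_diag :: "('x, 'f, 'l, 'g, 'z) lnl_data_scheme \<Rightarrow> 'x \<Rightarrow> 'f" where
  "C_diag D X = C_pair D (C_id D X) (C_id D X)"

locale lnl_adjunction =
  fixes D :: "('x, 'f, 'l, 'g, 'z) lnl_data_scheme"
  assumes
    C_id_hom: "C_id D X \<in> C_hom D X X"
  and C_comp_hom: "\<lbrakk>f \<in> C_hom D X Y; g \<in> C_hom D Y Z\<rbrakk> \<Longrightarrow> C_comp D f g \<in> C_hom D X Z"
  and C_id_left: "f \<in> C_hom D X Y \<Longrightarrow> C_comp D (C_id D X) f = f"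
  and C_id_right: "f \<in> C_hom D X Y \<Longrightarrow> C_comp D f (C_id D Y) = f"
  and C_assoc: "\<lbrakk>f \<in> C_hom D X Y; g \<in> C_hom D Y Z; h \<in> C_hom D Z W\<rbrakk> \<Longrightarrow>
                 C_comp D (C_comp D f g) h = C_comp D f (C_comp D g h)"
  and C_p1_hom: "C_p1 D X Y \<in> C_hom D (C_prod D X Y) X"
  and C_p2_hom: "C_p2 D X Y \<in> C_hom D (C_prod D X Y) Y"
  and C_pair_hom: "\<lbrakk>f \<in> C_hom D Z X; g \<in> C_hom D Z Y\<rbrakk> \<Longrightarrow> C_pair D f g \<in> C_hom D Z (C_prod D X Y)"
  and C_pair_p1: "\<lbrakk>f \<in> C_hom D Z X; g \<in> C_hom D Z Y\<rbrakk> \<Longrightarrow> C_comp D (C_pair D f g) (C_p1 D X Y) = f"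
  and C_pair_p2: "\<lbrakk>f \<in> C_hom D Z X; g \<in> C_hom D Z Y\<rbrakk> \<Longrightarrow> C_comp D (C_pair D f g) (C_p2 D X Y) = g"
  and C_pair_unique: "h \<in> C_hom D Z (C_prod D X Y) \<Longrightarrow>
                 C_pair D (C_comp D h (C_p1 D X Y)) (C_comp D h (C_p2 D X Y)) = h"
  and C_bang_hom: "C_bang D X \<in> C_hom D X (C_term D)"
  and C_bang_unique: "f \<in> C_hom D X (C_term D) \<Longrightarrow> f = C_bang D X"
  and C_prod_assoc: "C_prod D (C_prod D X Y) Z = C_prod D X (C_prod D Y Z)"
  and C_prod_unit_left: "C_prod D (C_term D) X = X"
  and C_prod_unit_right: "C_prod D X (C_term D) = X"
  and C_lunitor_id: "C_p2 D (C_term D) X = C_id D X"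
  and C_runitor_id: "C_p1 D X (C_term D) = C_id D X"
  and C_associator_id:
    "C_pair D (C_comp D (C_p1 D (C_prod D X Y) Z) (C_p1 D X Y))
              (C_pair D (C_comp D (C_p1 D (C_prod D X Y) Z) (C_p2 D X Y)) (C_p2 D (C_prod D X Y) Z))
     = C_id D (C_prod D (C_prod D X Y) Z)"
  and L_id_hom: "L_id D A \<in> L_hom D A A"
  and L_comp_hom: "\<lbrakk>r \<in> L_hom D A B; s \<in> L_hom D B C\<rbrakk> \<Longrightarrow> L_comp D r s \<in> L_hom D A C"
  and L_id_left: "r \<in> L_hom D A B \<Longrightarrow> L_comp D (L_id D A) r = r"
  and L_id_right: "r \<in> L_hom D A B \<Longrightarrow> L_comp D r (L_id D B) = r"
  and L_assoc: "\<lbrakk>r \<in> L_hom D A B; s \<in> L_hom D B C; t \<in> L_hom D C E\<rbrakk> \<Longrightarrow>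
                 L_comp D (L_comp D r s) t = L_comp D r (L_comp D s t)"
  and L_tensm_hom: "\<lbrakk>r \<in> L_hom D A B; s \<in> L_hom D A' B'\<rbrakk> \<Longrightarrow>
                 L_tensm D r s \<in> L_hom D (L_tens D A A') (L_tens D B B')"
  and L_tensm_id: "L_tensm D (L_id D A) (L_id D B) = L_id D (L_tens D A B)"
  and L_tensm_comp: "\<lbrakk>r \<in> L_hom D A B; s \<in> L_hom D B C; r' \<in> L_hom D A' B'; s' \<in> L_hom D B' C'\<rbrakk> \<Longrightarrow>
                 L_tensm D (L_comp D r s) (L_comp D r' s') = L_comp D (L_tensm D r r') (L_tensm D s s')"
  and L_tens_assoc: "L_tens D (L_tens D A B) C = L_tens D A (L_tens D B C)"
  and L_tens_unit_left: "L_tens D (L_unit D) A = A"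
  and L_tens_unit_right: "L_tens D A (L_unit D) = A"
  and L_tensm_assoc: "\<lbrakk>r \<in> L_hom D A B; s \<in> L_hom D A' B'; t \<in> L_hom D A'' B''\<rbrakk> \<Longrightarrow>
                 L_tensm D (L_tensm D r s) t = L_tensm D r (L_tensm D s t)"
  and L_tensm_unit_left: "r \<in> L_hom D A B \<Longrightarrow> L_tensm D (L_id D (L_unit D)) r = r"
  and L_tensm_unit_right: "r \<in> L_hom D A B \<Longrightarrow> L_tensm D r (L_id D (L_unit D)) = r"
  and L_sym_hom: "L_sym D A B \<in> L_hom D (L_tens D A B) (L_tens D B A)"
  and L_sym_nat: "\<lbrakk>r \<in> L_hom D A B; s \<in> L_hom D A' B'\<rbrakk> \<Longrightarrow>
                 L_comp D (L_tensm D r s) (L_sym D B B') = L_comp D (L_sym D A A') (L_tensm D s r)"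
  and L_sym_inv: "L_comp D (L_sym D A B) (L_sym D B A) = L_id D (L_tens D A B)"
  and L_sym_hexagon: "L_sym D A (L_tens D B C) =
                 L_comp D (L_tensm D (L_sym D A B) (L_id D C)) (L_tensm D (L_id D B) (L_sym D A C))"
  and F_hom: "f \<in> C_hom D X Y \<Longrightarrow> F_mor D f \<in> L_hom D (F_ob D X) (F_ob D Y)"
  and F_id: "F_mor D (C_id D X) = L_id D (F_ob D X)"
  and F_comp: "\<lbrakk>f \<in> C_hom D X Y; g \<in> C_hom D Y Z\<rbrakk> \<Longrightarrow>
                 F_mor D (C_comp D f g) = L_comp D (F_mor D f) (F_mor D g)"
  and F_m_hom: "F_m D X Y \<in> L_hom D (L_tens D (F_ob D X) (F_ob D Y)) (F_ob D (C_prod D X Y))"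
  and F_minv_hom: "F_minv D X Y \<in> L_hom D (F_ob D (C_prod D X Y)) (L_tens D (F_ob D X) (F_ob D Y))"
  and F_m_minv: "L_comp D (F_m D X Y) (F_minv D X Y) = L_id D (L_tens D (F_ob D X) (F_ob D Y))"
  and F_minv_m: "L_comp D (F_minv D X Y) (F_m D X Y) = L_id D (F_ob D (C_prod D X Y))"
  and F_m1_hom: "F_m1 D \<in> L_hom D (L_unit D) (F_ob D (C_term D))"
  and F_m1inv_hom: "F_m1inv D \<in> L_hom D (F_ob D (C_term D)) (L_unit D)"
  and F_m1_m1inv: "L_comp D (F_m1 D) (F_m1inv D) = L_id D (L_unit D)"
  and F_m1inv_m1: "L_comp D (F_m1inv D) (F_m1 D) = L_id D (F_ob D (C_term D))"
  and F_m_nat: "\<lbrakk>f \<in> C_hom D X X'; g \<in> C_hom D Y Y'\<rbrakk> \<Longrightarrow>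
                 L_comp D (L_tensm D (F_mor D f) (F_mor D g)) (F_m D X' Y')
                 = L_comp D (F_m D X Y) (F_mor D (C_prodm D X Y f g))"
  and F_m_assoc: "L_comp D (L_tensm D (F_m D X Y) (L_id D (F_ob D Z))) (F_m D (C_prod D X Y) Z)
                 = L_comp D (L_tensm D (L_id D (F_ob D X)) (F_m D Y Z)) (F_m D X (C_prod D Y Z))"
  and F_m_unit_left: "L_comp D (L_tensm D (F_m1 D) (L_id D (F_ob D X))) (F_m D (C_term D) X)
                 = L_id D (F_ob D X)"
  and F_m_unit_right: "L_comp D (L_tensm D (L_id D (F_ob D X)) (F_m1 D)) (F_m D X (C_term D))
                 = L_id D (F_ob D X)"
  and F_m_sym: "L_comp D (L_sym D (F_ob D X) (F_ob D Y)) (F_m D Y X)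
                 = L_comp D (F_m D X Y) (F_mor D (C_swap D X Y))"
  and U_hom: "r \<in> L_hom D A B \<Longrightarrow> U_mor D r \<in> C_hom D (U_ob D A) (U_ob D B)"
  and U_id: "U_mor D (L_id D A) = C_id D (U_ob D A)"
  and U_comp: "\<lbrakk>r \<in> L_hom D A B; s \<in> L_hom D B C\<rbrakk> \<Longrightarrow>
                 U_mor D (L_comp D r s) = C_comp D (U_mor D r) (U_mor D s)"
  and U_n_hom: "U_n D A B \<in> C_hom D (C_prod D (U_ob D A) (U_ob D B)) (U_ob D (L_tens D A B))"
  and U_n1_hom: "U_n1 D \<in> C_hom D (C_term D) (U_ob D (L_unit D))"
  and U_n_nat: "\<lbrakk>r \<in> L_hom D A A'; s \<in> L_hom D B B'\<rbrakk> \<Longrightarrow>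
                 C_comp D (C_prodm D (U_ob D A) (U_ob D B) (U_mor D r) (U_mor D s)) (U_n D A' B')
                 = C_comp D (U_n D A B) (U_mor D (L_tensm D r s))"
  and U_n_assoc: "C_comp D (C_prodm D (C_prod D (U_ob D A) (U_ob D B)) (U_ob D C) (U_n D A B) (C_id D (U_ob D C)))
                          (U_n D (L_tens D A B) C)
                 = C_comp D (C_prodm D (U_ob D A) (C_prod D (U_ob D B) (U_ob D C)) (C_id D (U_ob D A)) (U_n D B C))
                          (U_n D A (L_tens D B C))"
  and U_n_unit_left: "C_comp D (C_prodm D (C_term D) (U_ob D A) (U_n1 D) (C_id D (U_ob D A))) (U_n D (L_unit D) A)
                 = C_id D (U_ob D A)"
  and U_n_unit_right: "C_comp D (C_prodm D (U_ob D A) (C_term D) (C_id D (U_ob D A)) (U_n1 D)) (U_n D A (L_unit D))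
                 = C_id D (U_ob D A)"
  and U_n_sym: "C_comp D (C_swap D (U_ob D A) (U_ob D B)) (U_n D B A)
                 = C_comp D (U_n D A B) (U_mor D (L_sym D A B))"
  and eta_hom: "adj_eta D X \<in> C_hom D X (U_ob D (F_ob D X))"
  and eps_hom: "adj_eps D A \<in> L_hom D (F_ob D (U_ob D A)) A"
  and eta_nat: "f \<in> C_hom D X Y \<Longrightarrow>
                 C_comp D f (adj_eta D Y) = C_comp D (adj_eta D X) (U_mor D (F_mor D f))"
  and eps_nat: "s \<in> L_hom D A B \<Longrightarrow>
                 L_comp D (F_mor D (U_mor D s)) (adj_eps D B) = L_comp D (adj_eps D A) s"
  and adj_triangle_F: "L_comp D (F_mor D (adj_eta D X)) (adj_eps D (F_ob D X)) = L_id D (F_ob D X)"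
  and adj_triangle_U: "C_comp D (adj_eta D (U_ob D A)) (U_mor D (adj_eps D A)) = C_id D (U_ob D A)"
  and eta_monoidal: "adj_eta D (C_prod D X Y) =
                 C_comp D (C_comp D (C_prodm D X Y (adj_eta D X) (adj_eta D Y)) (U_n D (F_ob D X) (F_ob D Y)))
                          (U_mor D (F_m D X Y))"
  and eta_monoidal_unit: "adj_eta D (C_term D) = C_comp D (U_n1 D) (U_mor D (F_m1 D))"
  and eps_monoidal: "L_comp D (L_comp D (F_m D (U_ob D A) (U_ob D B)) (F_mor D (U_n D A B))) (adj_eps D (L_tens D A B))
                 = L_tensm D (adj_eps D A) (adj_eps D B)"
  and eps_monoidal_unit: "L_comp D (L_comp D (F_m1 D) (F_mor D (U_n1 D))) (adj_eps D (L_unit D))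
                 = L_id D (L_unit D)"

definition ls_c :: "('x, 'f, 'l, 'g, 'z) lnl_data_scheme \<Rightarrow> 'x \<Rightarrow> 'g" where
  "ls_c D X = L_comp D (F_mor D (C_diag D X)) (F_minv D X X)"

definition ls_w :: "('x, 'f, 'l, 'g, 'z) lnl_data_scheme \<Rightarrow> 'x \<Rightarrow> 'g" where
  "ls_w D X = L_comp D (F_mor D (C_bang D X)) (F_m1inv D)"

definition ls_hom :: "('x, 'f, 'l, 'g, 'z) lnl_data_scheme \<Rightarrow> 'x \<times> 'l \<Rightarrow> 'x \<times> 'l \<Rightarrow> ('f \<times> 'g) set" where
  "ls_hom D XA YB = {(f, u). f \<in> C_hom D (fst XA) (fst YB) \<and>
                              u \<in> L_hom D (L_tens D (F_ob D (fst XA)) (snd XA)) (snd YB)}"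

definition ls_comp :: "('x, 'f, 'l, 'g, 'z) lnl_data_scheme \<Rightarrow> 'x \<times> 'l \<Rightarrow> 'f \<times> 'g \<Rightarrow> 'f \<times> 'g \<Rightarrow> 'f \<times> 'g" where
  "ls_comp D XA fu gv =
     (C_comp D (fst fu) (fst gv),
      L_comp D (L_comp D (L_tensm D (ls_c D (fst XA)) (L_id D (snd XA)))
                         (L_tensm D (F_mor D (fst fu)) (snd fu)))
               (snd gv))"

definition ls_id :: "('x, 'f, 'l, 'g, 'z) lnl_data_scheme \<Rightarrow> 'x \<times> 'l \<Rightarrow> 'f \<times> 'g" where
  "ls_id D XA = (C_id D (fst XA), L_tensm D (ls_w D (fst XA)) (L_id D (snd XA)))"

definition fib_hom :: "('x, 'f, 'l, 'g, 'z) lnl_data_scheme \<Rightarrow> 'x \<Rightarrow> 'l \<Rightarrow> 'l \<Rightarrow> ('f \<times> 'g) set" where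
  "fib_hom D X A B = {fu \<in> ls_hom D (X, A) (X, B). fst fu = C_id D X}"

definition reindex_ob :: "'x \<Rightarrow> 'x \<times> 'l \<Rightarrow> 'x \<times> 'l" where
  "reindex_ob X' XB = (X', snd XB)"

definition reindex_mor :: "('x, 'f, 'l, 'g, 'z) lnl_data_scheme \<Rightarrow> 'f \<Rightarrow> 'x \<Rightarrow> 'x \<times> 'l \<Rightarrow> 'f \<times> 'g \<Rightarrow> 'f \<times> 'g" where
  "reindex_mor D f X' XA v = (C_id D X', L_comp D (L_tensm D (F_mor D f) (L_id D (snd XA))) (snd v))"

definition Sigma_ob :: "('x, 'f, 'l, 'g, 'z) lnl_data_scheme \<Rightarrow> 'x \<Rightarrow> 'x \<Rightarrow> 'x \<times> 'l \<Rightarrow> 'x \<times> 'l" where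
  "Sigma_ob D X J XJA = (X, L_tens D (F_ob D J) (snd XJA))"

definition Sigma_mor :: "('x, 'f, 'l, 'g, 'z) lnl_data_scheme \<Rightarrow> 'x \<Rightarrow> 'x \<Rightarrow> 'x \<times> 'l \<Rightarrow> 'f \<times> 'g \<Rightarrow> 'f \<times> 'g" where
  "Sigma_mor D X J XJA u =
     (C_id D X,
      L_comp D (L_comp D
        (L_tensm D (L_tensm D (L_id D (F_ob D X)) (ls_c D J)) (L_id D (snd XJA)))
        (L_tensm D (L_sym D (F_ob D X) (F_ob D J)) (L_id D (L_tens D (F_ob D J) (snd XJA)))))
        (L_tensm D (L_id D (F_ob D J))
                   (L_comp D (L_tensm D (F_m D X J) (L_id D (snd XJA))) (snd u))))"

definition Sigma_unit :: "('x, 'f, 'l, 'g, 'z) lnl_data_scheme \<Rightarrow> 'x \<Rightarrow> 'x \<Rightarrow> 'x \<times> 'l \<Rightarrow> 'f \<times> 'g" where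
  "Sigma_unit D X J XJA =
     (C_id D (C_prod D X J),
      L_comp D (L_tensm D (F_minv D X J) (L_id D (snd XJA)))
               (L_tensm D (ls_w D X) (L_id D (L_tens D (F_ob D J) (snd XJA)))))"

definition Sigma_counit :: "('x, 'f, 'l, 'g, 'z) lnl_data_scheme \<Rightarrow> 'x \<Rightarrow> 'x \<Rightarrow> 'x \<times> 'l \<Rightarrow> 'f \<times> 'g" where
  "Sigma_counit D X J XA =
     (C_id D X, L_tensm D (L_tensm D (ls_w D X) (ls_w D J)) (L_id D (snd XA)))"

end

theory Submission
  imports Defs
begin

text \<open>
  A fibre LS(C)_Y is the co-Kleisli category of the comonad F Y \<otimes> - on L given by the comonoid
  (F Y, c_Y, w_Y); reindexing along \<pi>1 precomposes with F \<pi>1 \<otimes> id, and Sigma_(X,J)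
  precomposes with copy_snd \<otimes> id, where
  copy_snd = (id \<otimes> c_J);(\<sigma> \<otimes> id);(id \<otimes> m) : F X \<otimes> F J \<rightarrow> F J \<otimes> F (X \<times> J).
  The whole proof rests on one observation: up to the isomorphisms m, copy_snd is the image under F
  of the cartesian map \<langle>\<pi>2, id\<rangle> : X \<times> J \<rightarrow> J \<times> (X \<times> J), just as c_X is the image of the
  diagonal and w_X that of X \<rightarrow> I. The unit \<nu> turns out to be F \<pi>2 \<otimes> id. Functoriality of
  Sigma, naturality of \<nu> and \<mu> and the triangle identities thereby reduce to identities between
  pairings and projections in C.
\<close>

text \<open>
  Hom-sets are explicit, so every categorical law carries typing side conditions. The rules
  collected in \<open>typing\<close> state the domain and codomain of each constructor as equations, so that
  \<open>rule typing\<close> can infer the intermediate objects and leave only equations between objects,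
  which hold up to the strictness laws \<open>strict_monoidal\<close>.
\<close>

named_theorems typing

context lnl_adjunction
begin

abbreviation C_comp_syn (infixl "\<bullet>" 55) where "f \<bullet> g \<equiv> C_comp D f g"
abbreviation C_prod_syn (infixr "\<times>\<^sub>C" 65) where "X \<times>\<^sub>C Y \<equiv> C_prod D X Y"
abbreviation C_pair_syn ("\<langle>_,/ _\<rangle>") where "\<langle>f, g\<rangle> \<equiv> C_pair D f g"
abbreviation "idC X \<equiv> C_id D X"
abbreviation "\<pi>\<^sub>1 X Y \<equiv> C_p1 D X Y"
abbreviation "\<pi>\<^sub>2 X Y \<equiv> C_p2 D X Y"
abbreviation "\<delta> X \<equiv> C_diag D X"
abbreviation "terminal \<equiv> C_term D"
abbreviation "bang X \<equiv> C_bang D X"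
abbreviation "prodm X Y f g \<equiv> C_prodm D X Y f g"

abbreviation L_comp_syn (infixl ";;" 55) where "r ;; s \<equiv> L_comp D r s"
abbreviation L_tensm_syn (infixr "\<otimes>" 60) where "r \<otimes> s \<equiv> L_tensm D r s"
abbreviation L_tens_syn (infixr "\<odot>" 60) where "A \<odot> B \<equiv> L_tens D A B"
abbreviation "idL A \<equiv> L_id D A"
abbreviation "\<sigma> A B \<equiv> L_sym D A B"
abbreviation "Fob X \<equiv> F_ob D X"
abbreviation "Fmor f \<equiv> F_mor D f"
abbreviation "mon X Y \<equiv> F_m D X Y"
abbreviation "mon_inv X Y \<equiv> F_minv D X Y"
abbreviation "copy X \<equiv> ls_c D X"
abbreviation "discard X \<equiv> ls_w D X"

lemmas strict_monoidal = C_prod_assoc C_prod_unit_left C_prod_unit_right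
  L_tens_assoc L_tens_unit_left L_tens_unit_right

declare refl [typing]

lemma C_comp_typed [typing]:
  "f \<in> C_hom D X Y \<Longrightarrow> g \<in> C_hom D Y' Z \<Longrightarrow> Y' = Y \<Longrightarrow> P = X \<Longrightarrow> Q = Z \<Longrightarrow> f \<bullet> g \<in> C_hom D P Q"
  using C_comp_hom by blast
lemma C_id_typed [typing]: "P = X \<Longrightarrow> Q = X \<Longrightarrow> idC X \<in> C_hom D P Q"
  using C_id_hom by blast
lemma C_p1_typed [typing]: "P = X \<times>\<^sub>C Y \<Longrightarrow> Q = X \<Longrightarrow> \<pi>\<^sub>1 X Y \<in> C_hom D P Q"
  using C_p1_hom by blast
lemma C_p2_typed [typing]: "P = X \<times>\<^sub>C Y \<Longrightarrow> Q = Y \<Longrightarrow> \<pi>\<^sub>2 X Y \<in> C_hom D P Q"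
  using C_p2_hom by blast
lemma C_pair_typed [typing]:
  "f \<in> C_hom D Z X \<Longrightarrow> g \<in> C_hom D Z' Y \<Longrightarrow> Z' = Z \<Longrightarrow> P = Z \<Longrightarrow> Q = X \<times>\<^sub>C Y \<Longrightarrow> \<langle>f, g\<rangle> \<in> C_hom D P Q"
  using C_pair_hom by blast
lemma C_bang_typed [typing]: "P = X \<Longrightarrow> Q = terminal \<Longrightarrow> bang X \<in> C_hom D P Q"
  using C_bang_hom by blast
lemma C_diag_typed [typing]: "P = X \<Longrightarrow> Q = X \<times>\<^sub>C X \<Longrightarrow> \<delta> X \<in> C_hom D P Q"
  unfolding C_diag_def using C_pair_hom C_id_hom by blast
lemma C_prodm_typed [typing]:
  "f \<in> C_hom D X X' \<Longrightarrow> g \<in> C_hom D Y Y' \<Longrightarrow> P = X \<times>\<^sub>C Y \<Longrightarrow> Q = X' \<times>\<^sub>C Y' \<Longrightarrow> prodm X Y f g \<in> C_hom D P Q"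
  unfolding C_prodm_def by (rule typing | assumption)+
lemma C_swap_typed [typing]: "P = X \<times>\<^sub>C Y \<Longrightarrow> Q = Y \<times>\<^sub>C X \<Longrightarrow> C_swap D X Y \<in> C_hom D P Q"
  unfolding C_swap_def by (rule typing)+

lemma L_comp_typed [typing]:
  "r \<in> L_hom D A B \<Longrightarrow> s \<in> L_hom D B' C \<Longrightarrow> B' = B \<Longrightarrow> P = A \<Longrightarrow> Q = C \<Longrightarrow> r ;; s \<in> L_hom D P Q"
  using L_comp_hom by blast
lemma L_tensm_typed [typing]:
  "r \<in> L_hom D A B \<Longrightarrow> s \<in> L_hom D A' B' \<Longrightarrow> P = A \<odot> A' \<Longrightarrow> Q = B \<odot> B' \<Longrightarrow> r \<otimes> s \<in> L_hom D P Q"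
  using L_tensm_hom by blast
lemma L_id_typed [typing]: "P = A \<Longrightarrow> Q = A \<Longrightarrow> idL A \<in> L_hom D P Q"
  using L_id_hom by blast
lemma L_sym_typed [typing]: "P = A \<odot> B \<Longrightarrow> Q = B \<odot> A \<Longrightarrow> \<sigma> A B \<in> L_hom D P Q"
  using L_sym_hom by blast
lemma F_mor_typed [typing]: "f \<in> C_hom D X Y \<Longrightarrow> P = Fob X \<Longrightarrow> Q = Fob Y \<Longrightarrow> Fmor f \<in> L_hom D P Q"
  using F_hom by blast
lemma F_m_typed [typing]: "P = Fob X \<odot> Fob Y \<Longrightarrow> Q = Fob (X \<times>\<^sub>C Y) \<Longrightarrow> mon X Y \<in> L_hom D P Q"
  using F_m_hom by blast
lemma F_minv_typed [typing]: "P = Fob (X \<times>\<^sub>C Y) \<Longrightarrow> Q = Fob X \<odot> Fob Y \<Longrightarrow> mon_inv X Y \<in> L_hom D P Q"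
  using F_minv_hom by blast
lemma F_m1_typed [typing]: "P = L_unit D \<Longrightarrow> Q = Fob terminal \<Longrightarrow> F_m1 D \<in> L_hom D P Q"
  using F_m1_hom by blast
lemma F_m1inv_typed [typing]: "P = Fob terminal \<Longrightarrow> Q = L_unit D \<Longrightarrow> F_m1inv D \<in> L_hom D P Q"
  using F_m1inv_hom by blast
lemma copy_typed [typing]: "P = Fob X \<Longrightarrow> Q = Fob X \<odot> Fob X \<Longrightarrow> copy X \<in> L_hom D P Q"
  unfolding ls_c_def by (rule typing)+
lemma discard_typed [typing]: "P = Fob X \<Longrightarrow> Q = L_unit D \<Longrightarrow> discard X \<in> L_hom D P Q"
  unfolding ls_w_def by (rule typing)+


section \<open>Pairing and projections in C\<close>

lemma C_pair_eqI:
  assumes "a \<in> C_hom D Z (X \<times>\<^sub>C Y)" "a \<bullet> \<pi>\<^sub>1 X Y = f" "a \<bullet> \<pi>\<^sub>2 X Y = g"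
  shows "a = \<langle>f, g\<rangle>"
  using C_pair_unique[OF assms(1)] assms(2,3) by simp

lemma C_comp_pair:
  assumes [typing]: "h \<in> C_hom D W Z" "f \<in> C_hom D Z X" "g \<in> C_hom D Z Y"
  shows "h \<bullet> \<langle>f, g\<rangle> = \<langle>h \<bullet> f, h \<bullet> g\<rangle>"
proof (rule C_pair_eqI)
  show "h \<bullet> \<langle>f, g\<rangle> \<in> C_hom D W (X \<times>\<^sub>C Y)"
    by (rule typing | simp only: strict_monoidal)+
  show "h \<bullet> \<langle>f, g\<rangle> \<bullet> \<pi>\<^sub>1 X Y = h \<bullet> f"
    by (subst C_assoc; ((rule typing | simp only: strict_monoidal)+)?) (simp add: C_pair_p1[OF assms(2,3)])
  show "h \<bullet> \<langle>f, g\<rangle> \<bullet> \<pi>\<^sub>2 X Y = h \<bullet> g"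
    by (subst C_assoc; ((rule typing | simp only: strict_monoidal)+)?) (simp add: C_pair_p2[OF assms(2,3)])
qed

lemma C_associator_strict:
  "\<langle>\<pi>\<^sub>1 (X \<times>\<^sub>C Y) Z \<bullet> \<pi>\<^sub>1 X Y, \<langle>\<pi>\<^sub>1 (X \<times>\<^sub>C Y) Z \<bullet> \<pi>\<^sub>2 X Y, \<pi>\<^sub>2 (X \<times>\<^sub>C Y) Z\<rangle>\<rangle> = idC (X \<times>\<^sub>C Y \<times>\<^sub>C Z)"
  using C_associator_id[of X Y Z] by (simp only: C_prod_assoc)

lemma C_p1_assoc: "\<pi>\<^sub>1 X (Y \<times>\<^sub>C Z) = \<pi>\<^sub>1 (X \<times>\<^sub>C Y) Z \<bullet> \<pi>\<^sub>1 X Y"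
proof -
  have "\<pi>\<^sub>1 X (Y \<times>\<^sub>C Z) = idC (X \<times>\<^sub>C Y \<times>\<^sub>C Z) \<bullet> \<pi>\<^sub>1 X (Y \<times>\<^sub>C Z)"
    by (rule C_id_left[symmetric], rule C_p1_hom)
  also have "\<dots> = \<pi>\<^sub>1 (X \<times>\<^sub>C Y) Z \<bullet> \<pi>\<^sub>1 X Y"
    by (subst C_associator_strict[symmetric], rule C_pair_p1; ((rule typing | simp only: strict_monoidal)+)?)
  finally show ?thesis .
qed

lemma C_p2_assoc: "\<pi>\<^sub>2 X (Y \<times>\<^sub>C Z) = \<langle>\<pi>\<^sub>1 (X \<times>\<^sub>C Y) Z \<bullet> \<pi>\<^sub>2 X Y, \<pi>\<^sub>2 (X \<times>\<^sub>C Y) Z\<rangle>"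
proof -
  have "\<pi>\<^sub>2 X (Y \<times>\<^sub>C Z) = idC (X \<times>\<^sub>C Y \<times>\<^sub>C Z) \<bullet> \<pi>\<^sub>2 X (Y \<times>\<^sub>C Z)"
    by (rule C_id_left[symmetric], rule C_p2_hom)
  also have "\<dots> = \<langle>\<pi>\<^sub>1 (X \<times>\<^sub>C Y) Z \<bullet> \<pi>\<^sub>2 X Y, \<pi>\<^sub>2 (X \<times>\<^sub>C Y) Z\<rangle>"
    by (subst C_associator_strict[symmetric], rule C_pair_p2; ((rule typing | simp only: strict_monoidal)+)?)
  finally show ?thesis .
qed

lemma C_pair_term_right:
  assumes [typing]: "f \<in> C_hom D Z X" "g \<in> C_hom D Z terminal"
  shows "\<langle>f, g\<rangle> = f"
proof -
  have "\<langle>f, g\<rangle> = \<langle>f, g\<rangle> \<bullet> \<pi>\<^sub>1 X terminal"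
    by (simp add: C_runitor_id C_id_right[OF C_pair_hom[OF assms], simplified C_prod_unit_right])
  also have "\<dots> = f" by (rule C_pair_p1[OF assms])
  finally show ?thesis .
qed

lemma C_pair_term_left:
  assumes [typing]: "f \<in> C_hom D Z terminal" "g \<in> C_hom D Z Y"
  shows "\<langle>f, g\<rangle> = g"
proof -
  have "\<langle>f, g\<rangle> = \<langle>f, g\<rangle> \<bullet> \<pi>\<^sub>2 terminal Y"
    by (simp add: C_lunitor_id C_id_right[OF C_pair_hom[OF assms], simplified C_prod_unit_left])
  also have "\<dots> = g" by (rule C_pair_p2[OF assms])
  finally show ?thesis .
qed

lemma C_pair_p1_p2: "\<langle>\<pi>\<^sub>1 X Y, \<pi>\<^sub>2 X Y\<rangle> = idC (X \<times>\<^sub>C Y)"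
  using C_pair_unique[OF C_id_hom[of "X \<times>\<^sub>C Y"]] by (simp add: C_id_left[OF C_p1_hom] C_id_left[OF C_p2_hom])

lemma C_comp_bang: "f \<in> C_hom D X Y \<Longrightarrow> f \<bullet> bang Y = bang X"
  by (rule C_bang_unique) (simp add: C_comp_hom C_bang_hom)

lemma C_diag_hom: "\<delta> X \<in> C_hom D X (X \<times>\<^sub>C X)"
  by (rule typing | simp only: strict_monoidal)+

lemma C_diag_p1: "\<delta> X \<bullet> \<pi>\<^sub>1 X X = idC X"
  unfolding C_diag_def by (rule C_pair_p1; (rule typing | simp only: strict_monoidal)+)

lemma C_diag_p2: "\<delta> X \<bullet> \<pi>\<^sub>2 X X = idC X"
  unfolding C_diag_def by (rule C_pair_p2; (rule typing | simp only: strict_monoidal)+)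

lemma C_pair_prodm:
  assumes [typing]: "a \<in> C_hom D W X" "b \<in> C_hom D W Y" "f \<in> C_hom D X X'" "g \<in> C_hom D Y Y'"
  shows "\<langle>a, b\<rangle> \<bullet> prodm X Y f g = \<langle>a \<bullet> f, b \<bullet> g\<rangle>"
proof -
  have "\<langle>a, b\<rangle> \<bullet> prodm X Y f g = \<langle>\<langle>a, b\<rangle> \<bullet> (\<pi>\<^sub>1 X Y \<bullet> f), \<langle>a, b\<rangle> \<bullet> (\<pi>\<^sub>2 X Y \<bullet> g)\<rangle>"
    unfolding C_prodm_def by (rule C_comp_pair; (rule typing | simp only: strict_monoidal)+)
  also have "\<dots> = \<langle>a \<bullet> f, b \<bullet> g\<rangle>"
    by (subst C_assoc[symmetric]; ((rule typing | simp only: strict_monoidal)+)?)+ (simp add: C_pair_p1[OF assms(1,2)] C_pair_p2[OF assms(1,2)])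
  finally show ?thesis .
qed

lemma C_diag_prodm:
  assumes [typing]: "f \<in> C_hom D X Y" "g \<in> C_hom D X Z"
  shows "\<delta> X \<bullet> prodm X X f g = \<langle>f, g\<rangle>"
  unfolding C_diag_def
  by (subst C_pair_prodm; ((rule typing | simp only: strict_monoidal)+)?) (simp add: C_id_left[OF assms(1)] C_id_left[OF assms(2)])

lemma C_prodm_bang_id: "prodm X J (bang X) (idC J) = \<pi>\<^sub>2 X J"
  unfolding C_prodm_def
  by (subst C_pair_term_left; ((rule typing | simp only: strict_monoidal)+)?) (simp add: C_id_right[OF C_p2_hom])

lemma C_prodm_id_bang: "prodm X J (idC X) (bang J) = \<pi>\<^sub>1 X J"
  unfolding C_prodm_def
  by (subst C_pair_term_right; ((rule typing | simp only: strict_monoidal)+)?) (simp add: C_id_right[OF C_p1_hom])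

abbreviation dup_snd :: "'x \<Rightarrow> 'x \<Rightarrow> 'f" where
  "dup_snd X J \<equiv> \<langle>\<pi>\<^sub>2 X J, idC (X \<times>\<^sub>C J)\<rangle>"

lemma dup_snd_p1: "dup_snd X J \<bullet> \<pi>\<^sub>1 J (X \<times>\<^sub>C J) = \<pi>\<^sub>2 X J"
  by (rule C_pair_p1; (rule typing | simp only: strict_monoidal)+)

lemma dup_snd_p2: "dup_snd X J \<bullet> \<pi>\<^sub>2 J (X \<times>\<^sub>C J) = idC (X \<times>\<^sub>C J)"
  by (rule C_pair_p2; (rule typing | simp only: strict_monoidal)+)

lemma C_pair_assoc:
  assumes [typing]: "a \<in> C_hom D W X" "b \<in> C_hom D W Y" "c \<in> C_hom D W Z"
  shows "\<langle>\<langle>a, b\<rangle>, c\<rangle> = \<langle>a, \<langle>b, c\<rangle>\<rangle>"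
proof (rule C_pair_eqI)
  have ab: "\<langle>a, b\<rangle> \<in> C_hom D W (X \<times>\<^sub>C Y)"
    by (rule typing | simp only: strict_monoidal)+
  show "\<langle>\<langle>a, b\<rangle>, c\<rangle> \<in> C_hom D W (X \<times>\<^sub>C Y \<times>\<^sub>C Z)"
    using C_pair_hom[OF ab assms(3)] by (simp only: C_prod_assoc)
  have "\<langle>\<langle>a, b\<rangle>, c\<rangle> \<bullet> \<pi>\<^sub>1 X (Y \<times>\<^sub>C Z) = \<langle>\<langle>a, b\<rangle>, c\<rangle> \<bullet> \<pi>\<^sub>1 (X \<times>\<^sub>C Y) Z \<bullet> \<pi>\<^sub>1 X Y"
    by (subst C_p1_assoc, rule C_assoc[symmetric]; (rule typing | simp only: strict_monoidal)+)
  then show "\<langle>\<langle>a, b\<rangle>, c\<rangle> \<bullet> \<pi>\<^sub>1 X (Y \<times>\<^sub>C Z) = a"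
    by (simp add: C_pair_p1[OF ab assms(3)] C_pair_p1[OF assms(1,2)])
  have "\<langle>\<langle>a, b\<rangle>, c\<rangle> \<bullet> \<pi>\<^sub>2 X (Y \<times>\<^sub>C Z) =
      \<langle>\<langle>\<langle>a, b\<rangle>, c\<rangle> \<bullet> \<pi>\<^sub>1 (X \<times>\<^sub>C Y) Z \<bullet> \<pi>\<^sub>2 X Y, \<langle>\<langle>a, b\<rangle>, c\<rangle> \<bullet> \<pi>\<^sub>2 (X \<times>\<^sub>C Y) Z\<rangle>"
    by (subst C_p2_assoc, (subst C_comp_pair; ((rule typing | simp only: strict_monoidal)+)?), (subst C_assoc; ((rule typing | simp only: strict_monoidal)+)?))
  then show "\<langle>\<langle>a, b\<rangle>, c\<rangle> \<bullet> \<pi>\<^sub>2 X (Y \<times>\<^sub>C Z) = \<langle>b, c\<rangle>"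
    by (simp add: C_pair_p1[OF ab assms(3)] C_pair_p2[OF ab assms(3)] C_pair_p2[OF assms(1,2)])
qed

lemma C_comp_diag: "f \<in> C_hom D X Y \<Longrightarrow> f \<bullet> \<delta> Y = \<langle>f, f\<rangle>"
  unfolding C_diag_def by (subst C_comp_pair; ((rule typing | assumption)+)?) (simp add: C_id_right)

lemma C_prodm_id_diag: "prodm X J (idC X) (\<delta> J) = \<langle>idC (X \<times>\<^sub>C J), \<pi>\<^sub>2 X J\<rangle>"
proof -
  have "prodm X J (idC X) (\<delta> J) = \<langle>\<pi>\<^sub>1 X J, \<langle>\<pi>\<^sub>2 X J, \<pi>\<^sub>2 X J\<rangle>\<rangle>"
    by (simp add: C_prodm_def C_id_right[OF C_p1_hom] C_comp_diag[OF C_p2_hom])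
  also have "\<dots> = \<langle>\<langle>\<pi>\<^sub>1 X J, \<pi>\<^sub>2 X J\<rangle>, \<pi>\<^sub>2 X J\<rangle>"
    by (rule C_pair_assoc[symmetric]; (rule typing | simp only: strict_monoidal)+)
  finally show ?thesis by (simp only: C_pair_p1_p2)
qed

lemma C_prodm_diag_id: "prodm X J (\<delta> X) (idC J) = \<langle>\<pi>\<^sub>1 X J, idC (X \<times>\<^sub>C J)\<rangle>"
proof -
  have "prodm X J (\<delta> X) (idC J) = \<langle>\<langle>\<pi>\<^sub>1 X J, \<pi>\<^sub>1 X J\<rangle>, \<pi>\<^sub>2 X J\<rangle>"
    by (simp add: C_prodm_def C_id_right[OF C_p2_hom] C_comp_diag[OF C_p1_hom])
  also have "\<dots> = \<langle>\<pi>\<^sub>1 X J, \<langle>\<pi>\<^sub>1 X J, \<pi>\<^sub>2 X J\<rangle>\<rangle>"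
    by (rule C_pair_assoc; (rule typing | simp only: strict_monoidal)+)
  finally show ?thesis by (simp only: C_pair_p1_p2)
qed

lemma C_diag_swap: "prodm X J (idC X) (\<delta> J) \<bullet> prodm (X \<times>\<^sub>C J) J (C_swap D X J) (idC J) = dup_snd X J"
proof -
  have "prodm X J (idC X) (\<delta> J) \<bullet> prodm (X \<times>\<^sub>C J) J (C_swap D X J) (idC J)
      = \<langle>\<langle>\<pi>\<^sub>2 X J, \<pi>\<^sub>1 X J\<rangle>, \<pi>\<^sub>2 X J\<rangle>"
    unfolding C_prodm_id_diag
    by (subst C_pair_prodm; ((rule typing | simp only: strict_monoidal)+)?)
      (simp add: C_id_left[OF C_swap_typed[OF refl refl]] C_id_right[OF C_p2_hom], simp add: C_swap_def)
  also have "\<dots> = \<langle>\<pi>\<^sub>2 X J, \<langle>\<pi>\<^sub>1 X J, \<pi>\<^sub>2 X J\<rangle>\<rangle>"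
    by (rule C_pair_assoc; (rule typing | simp only: strict_monoidal)+)
  finally show ?thesis by (simp only: C_pair_p1_p2)
qed

lemma C_pair_p1_dup_snd: "\<langle>\<pi>\<^sub>1 X J, dup_snd X J\<rangle> = \<delta> (X \<times>\<^sub>C J)"
  unfolding C_diag_def
  by (subst C_pair_assoc[symmetric]; ((rule typing | simp only: strict_monoidal)+)?) (simp only: C_pair_p1_p2)

lemma C_pair_p2_diag: "\<langle>\<pi>\<^sub>2 X J, \<delta> (X \<times>\<^sub>C J)\<rangle> = \<langle>dup_snd X J, idC (X \<times>\<^sub>C J)\<rangle>"
  unfolding C_diag_def by (rule C_pair_assoc[symmetric]; (rule typing | simp only: strict_monoidal)+)

lemma dup_snd_diag:
  "dup_snd X J \<bullet> prodm J (X \<times>\<^sub>C J) (idC J) (\<delta> (X \<times>\<^sub>C J))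
   = prodm X J (\<delta> X) (idC J) \<bullet> prodm X (X \<times>\<^sub>C J) (idC X) (dup_snd X J)
       \<bullet> prodm (X \<times>\<^sub>C J) (X \<times>\<^sub>C J) (dup_snd X J) (idC (X \<times>\<^sub>C J))"
proof -
  have diag: "prodm X J (\<delta> X) (idC J) \<bullet> prodm X (X \<times>\<^sub>C J) (idC X) (dup_snd X J) = \<delta> (X \<times>\<^sub>C J)"
    unfolding C_prodm_diag_id C_pair_p1_dup_snd[symmetric]
    by (subst C_pair_prodm; ((rule typing | simp only: strict_monoidal)+)?)
      (simp add: C_id_right[OF C_p1_hom] C_id_left[OF C_pair_typed[OF C_p2_hom C_id_hom refl refl refl]])
  have "dup_snd X J \<bullet> prodm J (X \<times>\<^sub>C J) (idC J) (\<delta> (X \<times>\<^sub>C J)) = \<langle>\<pi>\<^sub>2 X J, \<delta> (X \<times>\<^sub>C J)\<rangle>"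
    by (subst C_pair_prodm; ((rule typing | simp only: strict_monoidal)+)?)
      (simp add: C_id_right[OF C_p2_hom] C_id_left[OF C_diag_typed[OF refl refl]])
  also have "\<dots> = \<langle>dup_snd X J, idC (X \<times>\<^sub>C J)\<rangle>"
    by (rule C_pair_p2_diag)
  also have "\<dots> = \<delta> (X \<times>\<^sub>C J) \<bullet> prodm (X \<times>\<^sub>C J) (X \<times>\<^sub>C J) (dup_snd X J) (idC (X \<times>\<^sub>C J))"
    by (subst C_diag_prodm; ((rule typing | simp only: strict_monoidal)+)?)
  finally show ?thesis
    by (simp only: diag)
qed

section \<open>Strict symmetric monoidal structure of L\<close>

lemma L_id_left': "r \<in> L_hom D A B \<Longrightarrow> A' = A \<Longrightarrow> idL A' ;; r = r"
  using L_id_left by blast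

lemma L_id_right': "r \<in> L_hom D A B \<Longrightarrow> B' = B \<Longrightarrow> r ;; idL B' = r"
  using L_id_right by blast

lemma L_comp_assoc_subst:
  assumes "a ;; b = e"
    and [typing]: "t \<in> L_hom D A B" "a \<in> L_hom D B C" "b \<in> L_hom D C E"
  shows "t ;; a ;; b = t ;; e"
  by (subst L_assoc; ((rule typing | simp only: strict_monoidal)+)?) (simp only: assms(1))

lemma L_inverse_unique:
  assumes [typing]: "a \<in> L_hom D A B" "b \<in> L_hom D B A" "b' \<in> L_hom D B A"
    and "b ;; a = idL B" "a ;; b' = idL A"
  shows "b = b'"
proof -
  have "b = b ;; (a ;; b')"
    by (simp only: assms(5) L_id_right[OF assms(2)])
  also have "\<dots> = b'"
    by (subst L_assoc[symmetric]; ((rule typing | simp only: strict_monoidal)+)?) (simp only: assms(4) L_id_left[OF assms(3)])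
  finally show ?thesis .
qed

lemma L_comp_inverse:
  assumes [typing]: "p \<in> L_hom D A B" "q \<in> L_hom D B C" "q' \<in> L_hom D C B" "p' \<in> L_hom D B A"
    and "q ;; q' = idL B" "p ;; p' = idL A"
  shows "(p ;; q) ;; (q' ;; p') = idL A"
proof -
  have "(p ;; q) ;; (q' ;; p') = p ;; (q ;; q') ;; p'"
    by (subst L_assoc; ((rule typing | simp only: strict_monoidal)+)?)+
  also have "\<dots> = idL A"
    by (simp only: assms(5,6) L_id_right[OF assms(1)])
  finally show ?thesis .
qed

lemma L_tensm_comp_left:
  assumes [typing]: "a \<in> L_hom D A B" "b \<in> L_hom D B C" "c \<in> L_hom D A' B'"
  shows "(a ;; b) \<otimes> c = (a \<otimes> c) ;; (b \<otimes> idL B')"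
  by (subst L_tensm_comp[symmetric]; ((rule typing | simp only: strict_monoidal)+)?) (simp only: L_id_right[OF assms(3)])

lemma L_tensm_comp_left':
  assumes [typing]: "a \<in> L_hom D A B" "b \<in> L_hom D B C" "c \<in> L_hom D A' B'"
  shows "(a ;; b) \<otimes> c = (a \<otimes> idL A') ;; (b \<otimes> c)"
  by (subst L_tensm_comp[symmetric]; ((rule typing | simp only: strict_monoidal)+)?) (simp only: L_id_left[OF assms(3)])

lemma L_tensm_comp_right:
  assumes [typing]: "a \<in> L_hom D A B" "b \<in> L_hom D B C" "c \<in> L_hom D A' B'"
  shows "c \<otimes> (a ;; b) = (c \<otimes> a) ;; (idL B' \<otimes> b)"
  by (subst L_tensm_comp[symmetric]; ((rule typing | simp only: strict_monoidal)+)?) (simp only: L_id_right[OF assms(3)])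

lemma L_tensm_comp_right':
  assumes [typing]: "a \<in> L_hom D A B" "b \<in> L_hom D B C" "c \<in> L_hom D A' B'"
  shows "c \<otimes> (a ;; b) = (idL A' \<otimes> a) ;; (c \<otimes> b)"
  by (subst L_tensm_comp[symmetric]; ((rule typing | simp only: strict_monoidal)+)?) (simp only: L_id_left[OF assms(3)])

lemma L_tensm_split:
  assumes [typing]: "k \<in> L_hom D P Q" "u \<in> L_hom D A B"
  shows "k \<otimes> u = (k \<otimes> idL A) ;; (idL Q \<otimes> u)"
  by (subst L_tensm_comp[symmetric]; ((rule typing | simp only: strict_monoidal)+)?) (simp only: L_id_left[OF assms(2)] L_id_right[OF assms(1)])

lemma L_tensm_interchange:
  assumes [typing]: "u \<in> L_hom D A B" "k \<in> L_hom D P Q"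
  shows "(idL P \<otimes> u) ;; (k \<otimes> idL B) = (k \<otimes> idL A) ;; (idL Q \<otimes> u)"
  by (subst L_tensm_comp[symmetric]; ((rule typing | simp only: strict_monoidal)+)?)+
    (simp only: L_id_left[OF assms(1)] L_id_left[OF assms(2)] L_id_right[OF assms(1)] L_id_right[OF assms(2)])

lemma L_tensm_inverse_left:
  assumes [typing]: "r \<in> L_hom D A B" "r' \<in> L_hom D B A" and "r ;; r' = idL A"
  shows "(r \<otimes> idL C) ;; (r' \<otimes> idL C) = idL (A \<odot> C)"
  by (subst L_tensm_comp[symmetric]; ((rule typing | simp only: strict_monoidal)+)?) (simp only: assms(3) L_id_left[OF L_id_hom] L_tensm_id)

lemma L_tensm_inverse_right:
  assumes [typing]: "r \<in> L_hom D A B" "r' \<in> L_hom D B A" and "r ;; r' = idL A"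
  shows "(idL C \<otimes> r) ;; (idL C \<otimes> r') = idL (C \<odot> A)"
  by (subst L_tensm_comp[symmetric]; ((rule typing | simp only: strict_monoidal)+)?) (simp only: assms(3) L_id_left[OF L_id_hom] L_tensm_id)

section \<open>The strong monoidal functor F and the comonoids F X\<close>

lemma F_id_tensm_left: "idL (Fob X) \<otimes> Fmor f = Fmor (idC X) \<otimes> Fmor f"
  by (simp only: F_id)

lemma F_id_tensm_right: "Fmor f \<otimes> idL (Fob X) = Fmor f \<otimes> Fmor (idC X)"
  by (simp only: F_id)

lemma F_tensm_eq:
  assumes [typing]: "f \<in> C_hom D X X'" "g \<in> C_hom D Y Y'"
  shows "Fmor f \<otimes> Fmor g = mon X Y ;; Fmor (prodm X Y f g) ;; mon_inv X' Y'"
  by ((subst F_m_nat[symmetric]; ((rule typing | simp only: strict_monoidal)+)?), (subst L_assoc; ((rule typing | simp only: strict_monoidal)+)?))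
    (simp only: F_m_minv, rule L_id_right[symmetric]; (rule typing | simp only: strict_monoidal)+)

lemma F_minv_nat:
  assumes [typing]: "f \<in> C_hom D X X'" "g \<in> C_hom D Y Y'"
  shows "mon_inv X Y ;; (Fmor f \<otimes> Fmor g) = Fmor (prodm X Y f g) ;; mon_inv X' Y'"
  by (subst F_tensm_eq[OF assms], (subst L_assoc[symmetric]; ((rule typing | simp only: strict_monoidal)+)?)+)
    (simp only: F_minv_m L_id_left[OF F_mor_typed[OF C_prodm_typed[OF assms refl refl] refl refl]])

lemma F_minv_unit_left: "mon_inv terminal X = F_m1 D \<otimes> idL (Fob X)"
proof (rule sym, rule L_inverse_unique)
  show "F_m1 D \<otimes> idL (Fob X) ;; mon terminal X = idL (Fob (terminal \<times>\<^sub>C X))"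
    by (simp only: F_m_unit_left C_prod_unit_left)
qed (rule typing F_m_minv | simp only: strict_monoidal)+

lemma F_minv_unit_right: "mon_inv X terminal = idL (Fob X) \<otimes> F_m1 D"
proof (rule sym, rule L_inverse_unique)
  show "idL (Fob X) \<otimes> F_m1 D ;; mon X terminal = idL (Fob (X \<times>\<^sub>C terminal))"
    by (simp only: F_m_unit_right C_prod_unit_right)
qed (rule typing F_m_minv | simp only: strict_monoidal)+

lemma F_minv_assoc:
  "mon_inv (X \<times>\<^sub>C Y) Z ;; (mon_inv X Y \<otimes> idL (Fob Z)) = mon_inv X (Y \<times>\<^sub>C Z) ;; (idL (Fob X) \<otimes> mon_inv Y Z)"
proof (rule L_inverse_unique)
  show "mon_inv (X \<times>\<^sub>C Y) Z ;; (mon_inv X Y \<otimes> idL (Fob Z)) ;; ((mon X Y \<otimes> idL (Fob Z)) ;; mon (X \<times>\<^sub>C Y) Z)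
    = idL (Fob (X \<times>\<^sub>C Y \<times>\<^sub>C Z))"
    by (rule L_comp_inverse L_tensm_inverse_left F_m_minv F_minv_m F_minv_m[of "X \<times>\<^sub>C Y" Z, unfolded C_prod_assoc];
        ((rule typing | simp only: strict_monoidal)+)?)+
  have "(mon X Y \<otimes> idL (Fob Z)) ;; mon (X \<times>\<^sub>C Y) Z ;; (mon_inv X (Y \<times>\<^sub>C Z) ;; (idL (Fob X) \<otimes> mon_inv Y Z))
    = (idL (Fob X) \<otimes> mon Y Z) ;; mon X (Y \<times>\<^sub>C Z) ;; (mon_inv X (Y \<times>\<^sub>C Z) ;; (idL (Fob X) \<otimes> mon_inv Y Z))"
    by (simp only: F_m_assoc C_prod_assoc)
  also have "\<dots> = idL (Fob X \<odot> Fob Y \<odot> Fob Z)"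
    by (rule L_comp_inverse L_tensm_inverse_right F_minv_m F_m_minv; ((rule typing | simp only: strict_monoidal)+)?)+
  finally show "(mon X Y \<otimes> idL (Fob Z)) ;; mon (X \<times>\<^sub>C Y) Z ;; (mon_inv X (Y \<times>\<^sub>C Z) ;; (idL (Fob X) \<otimes> mon_inv Y Z))
    = idL ((Fob X \<odot> Fob Y) \<odot> Fob Z)"
    by (simp only: strict_monoidal)
qed ((rule typing | simp only: strict_monoidal)+)

lemma F_minv_sym: "mon_inv X Y ;; \<sigma> (Fob X) (Fob Y) = Fmor (C_swap D X Y) ;; mon_inv Y X"
proof -
  have "mon_inv X Y ;; \<sigma> (Fob X) (Fob Y) = mon_inv X Y ;; (\<sigma> (Fob X) (Fob Y) ;; mon Y X) ;; mon_inv Y X"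
    by ((subst L_assoc[symmetric]; ((rule typing | simp only: strict_monoidal)+)?), (subst L_assoc; ((rule typing | simp only: strict_monoidal)+)?))
      (simp only: F_m_minv L_id_right[OF L_comp_typed[OF F_minv_typed L_sym_typed]] refl)
  also have "\<dots> = mon_inv X Y ;; (mon X Y ;; Fmor (C_swap D X Y)) ;; mon_inv Y X"
    by (simp only: F_m_sym)
  also have "\<dots> = Fmor (C_swap D X Y) ;; mon_inv Y X"
    by (subst L_assoc[symmetric]; ((rule typing | simp only: strict_monoidal)+)?)
      (simp only: F_minv_m L_id_left[OF F_mor_typed[OF C_swap_typed]] refl)
  finally show ?thesis .
qed

lemma discard_nat:
  assumes [typing]: "f \<in> C_hom D X Y"
  shows "Fmor f ;; discard Y = discard X"
  unfolding ls_w_def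
  by (subst L_assoc[symmetric]; ((rule typing | simp only: strict_monoidal)+)?)
    (simp only: F_comp[symmetric, OF assms C_bang_hom] C_comp_bang[OF assms])

lemma F_minv_discard_left: "mon_inv X J ;; (discard X \<otimes> idL (Fob J)) = Fmor (\<pi>\<^sub>2 X J)"
proof -
  have split: "discard X \<otimes> idL (Fob J) = (Fmor (bang X) \<otimes> Fmor (idC J)) ;; (F_m1inv D \<otimes> idL (Fob J))"
    unfolding ls_w_def F_id by (rule L_tensm_comp_left; (rule typing | simp only: strict_monoidal)+)
  have unit: "mon_inv terminal J ;; (F_m1inv D \<otimes> idL (Fob J)) = idL (Fob J)"
    unfolding F_minv_unit_left
    by (rule L_tensm_inverse_left[OF _ _ F_m1_m1inv, unfolded L_tens_unit_left]; (rule typing | simp only: strict_monoidal)+)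
  have "mon_inv X J ;; (discard X \<otimes> idL (Fob J))
      = mon_inv X J ;; (Fmor (bang X) \<otimes> Fmor (idC J)) ;; (F_m1inv D \<otimes> idL (Fob J))"
    unfolding split by (rule L_assoc[symmetric]; (rule typing | simp only: strict_monoidal)+)
  also have "\<dots> = Fmor (\<pi>\<^sub>2 X J) ;; mon_inv terminal J ;; (F_m1inv D \<otimes> idL (Fob J))"
    by (simp only: F_minv_nat[OF C_bang_hom C_id_hom] C_prodm_bang_id)
  also have "\<dots> = Fmor (\<pi>\<^sub>2 X J)"
    by (subst L_assoc; ((rule typing | simp only: strict_monoidal)+)?) (simp only: unit, rule L_id_right; (rule typing | simp only: strict_monoidal)+)
  finally show ?thesis .
qed

lemma F_minv_discard_right: "mon_inv X J ;; (idL (Fob X) \<otimes> discard J) = Fmor (\<pi>\<^sub>1 X J)"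
proof -
  have split: "idL (Fob X) \<otimes> discard J = (Fmor (idC X) \<otimes> Fmor (bang J)) ;; (idL (Fob X) \<otimes> F_m1inv D)"
    unfolding ls_w_def F_id by (rule L_tensm_comp_right; (rule typing | simp only: strict_monoidal)+)
  have unit: "mon_inv X terminal ;; (idL (Fob X) \<otimes> F_m1inv D) = idL (Fob X)"
    unfolding F_minv_unit_right
    by (rule L_tensm_inverse_right[OF _ _ F_m1_m1inv, unfolded L_tens_unit_right]; (rule typing | simp only: strict_monoidal)+)
  have "mon_inv X J ;; (idL (Fob X) \<otimes> discard J)
      = mon_inv X J ;; (Fmor (idC X) \<otimes> Fmor (bang J)) ;; (idL (Fob X) \<otimes> F_m1inv D)"
    unfolding split by (rule L_assoc[symmetric]; (rule typing | simp only: strict_monoidal)+)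
  also have "\<dots> = Fmor (\<pi>\<^sub>1 X J) ;; mon_inv X terminal ;; (idL (Fob X) \<otimes> F_m1inv D)"
    by (simp only: F_minv_nat[OF C_id_hom C_bang_hom] C_prodm_id_bang)
  also have "\<dots> = Fmor (\<pi>\<^sub>1 X J)"
    by (subst L_assoc; ((rule typing | simp only: strict_monoidal)+)?) (simp only: unit, rule L_id_right; (rule typing | simp only: strict_monoidal)+)
  finally show ?thesis .
qed

lemma F_m_p1: "mon X J ;; Fmor (\<pi>\<^sub>1 X J) = idL (Fob X) \<otimes> discard J"
  unfolding F_minv_discard_right[symmetric]
  by (subst L_assoc[symmetric]; ((rule typing | simp only: strict_monoidal)+)?)
    (simp only: F_m_minv, rule L_id_left; (rule typing | simp only: strict_monoidal)+)

lemma copy_discard_left: "copy X ;; (discard X \<otimes> idL (Fob X)) = idL (Fob X)"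
  unfolding ls_c_def
  by (subst L_assoc; ((rule typing | simp only: strict_monoidal)+)?)
    (simp only: F_minv_discard_left F_comp[symmetric, OF C_diag_hom C_p2_hom] C_diag_p2 F_id)

lemma copy_discard_right: "copy X ;; (idL (Fob X) \<otimes> discard X) = idL (Fob X)"
  unfolding ls_c_def
  by (subst L_assoc; ((rule typing | simp only: strict_monoidal)+)?)
    (simp only: F_minv_discard_right F_comp[symmetric, OF C_diag_hom C_p1_hom] C_diag_p1 F_id)

lemma copy_discard_discard: "copy X ;; (discard X \<otimes> discard X) = discard X"
proof -
  have "discard X \<otimes> discard X = (discard X \<otimes> idL (Fob X)) ;; discard X"
    by (subst L_tensm_split[of "discard X"]; ((rule typing | simp only: strict_monoidal)+)?)
      (simp only: L_tensm_unit_left[OF discard_typed[OF refl refl]])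
  then have "copy X ;; (discard X \<otimes> discard X) = copy X ;; ((discard X \<otimes> idL (Fob X)) ;; discard X)"
    by (rule arg_cong)
  also have "\<dots> = copy X ;; (discard X \<otimes> idL (Fob X)) ;; discard X"
    by (rule L_assoc[symmetric]; (rule typing | simp only: strict_monoidal)+)
  finally show ?thesis
    by (simp only: copy_discard_left L_id_left[OF discard_typed[OF refl refl]])
qed

lemma copy_F_tensm:
  assumes [typing]: "f \<in> C_hom D Z X" "g \<in> C_hom D Z Y"
  shows "copy Z ;; (Fmor f \<otimes> Fmor g) = Fmor \<langle>f, g\<rangle> ;; mon_inv X Y"
  unfolding ls_c_def
  by ((subst L_assoc; ((rule typing | simp only: strict_monoidal)+)?), simp only: F_minv_nat[OF assms], (subst L_assoc[symmetric]; ((rule typing | simp only: strict_monoidal)+)?))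
    (simp only: F_comp[symmetric, OF C_diag_hom C_prodm_typed[OF assms refl refl]] C_diag_prodm[OF assms])

lemma copy_nat:
  assumes [typing]: "f \<in> C_hom D X Y"
  shows "copy X ;; (Fmor f \<otimes> Fmor f) = Fmor f ;; copy Y"
proof -
  have "copy X ;; (Fmor f \<otimes> Fmor f) = Fmor (f \<bullet> \<delta> Y) ;; mon_inv Y Y"
    by (simp only: copy_F_tensm[OF assms assms] C_comp_diag[OF assms])
  also have "\<dots> = Fmor f ;; copy Y"
    unfolding ls_c_def by (simp only: F_comp[OF assms C_diag_hom]) (rule L_assoc; (rule typing | simp only: strict_monoidal)+)
  finally show ?thesis .
qed

definition copy_snd :: "'x \<Rightarrow> 'x \<Rightarrow> 'g" where
  "copy_snd X J = (idL (Fob X) \<otimes> copy J) ;; (\<sigma> (Fob X) (Fob J) \<otimes> idL (Fob J)) ;; (idL (Fob J) \<otimes> mon X J)"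

lemma copy_snd_typed [typing]:
  "P = Fob X \<odot> Fob J \<Longrightarrow> Q = Fob J \<odot> Fob (X \<times>\<^sub>C J) \<Longrightarrow> copy_snd X J \<in> L_hom D P Q"
  unfolding copy_snd_def by (rule typing | simp only: strict_monoidal)+

lemma copy_snd_eq: "copy_snd X J = mon X J ;; Fmor (dup_snd X J) ;; mon_inv J (X \<times>\<^sub>C J)"
proof -
  have copy: "idL (Fob X) \<otimes> copy J
      = mon X J ;; Fmor (prodm X J (idC X) (\<delta> J)) ;; (mon_inv (X \<times>\<^sub>C J) J ;; (mon_inv X J \<otimes> idL (Fob J)))"
  proof -
    have "idL (Fob X) \<otimes> copy J = (Fmor (idC X) \<otimes> Fmor (\<delta> J)) ;; (idL (Fob X) \<otimes> mon_inv J J)"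
      unfolding ls_c_def F_id by (rule L_tensm_comp_right; (rule typing | simp only: strict_monoidal)+)
    also have "\<dots> = mon X J ;; Fmor (prodm X J (idC X) (\<delta> J)) ;; (mon_inv X (J \<times>\<^sub>C J) ;; (idL (Fob X) \<otimes> mon_inv J J))"
      by (subst F_tensm_eq; ((rule typing | simp only: strict_monoidal)+)?) (rule L_assoc; (rule typing | simp only: strict_monoidal)+)
    finally show ?thesis
      by (simp only: F_minv_assoc)
  qed
  have swap: "(mon_inv X J \<otimes> idL (Fob J)) ;; (\<sigma> (Fob X) (Fob J) \<otimes> idL (Fob J))
      = (Fmor (C_swap D X J) \<otimes> Fmor (idC J)) ;; (mon_inv J X \<otimes> idL (Fob J))"
    by (subst L_tensm_comp[symmetric]; ((rule typing | simp only: strict_monoidal)+)?)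
      (simp only: F_minv_sym F_id L_id_left[OF L_id_hom], rule L_tensm_comp_left; (rule typing | simp only: strict_monoidal)+)
  have mon: "mon_inv (J \<times>\<^sub>C X) J ;; (mon_inv J X \<otimes> idL (Fob J)) ;; (idL (Fob J) \<otimes> mon X J) = mon_inv J (X \<times>\<^sub>C J)"
    by (simp only: F_minv_assoc, (subst L_assoc; ((rule typing | simp only: strict_monoidal)+)?))
      (simp only: L_tensm_inverse_right[OF F_minv_typed F_m_typed F_minv_m] L_id_right[OF F_minv_typed] strict_monoidal)
  have "copy_snd X J = mon X J ;; Fmor (prodm X J (idC X) (\<delta> J)) ;; mon_inv (X \<times>\<^sub>C J) J
      ;; ((mon_inv X J \<otimes> idL (Fob J)) ;; (\<sigma> (Fob X) (Fob J) \<otimes> idL (Fob J))) ;; (idL (Fob J) \<otimes> mon X J)"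
    unfolding copy_snd_def copy by (subst L_assoc; ((rule typing | simp only: strict_monoidal)+)?)+
  also have "\<dots> = mon X J ;; Fmor (prodm X J (idC X) (\<delta> J)) ;; (mon_inv (X \<times>\<^sub>C J) J ;; (Fmor (C_swap D X J) \<otimes> Fmor (idC J)))
      ;; (mon_inv J X \<otimes> idL (Fob J)) ;; (idL (Fob J) \<otimes> mon X J)"
    unfolding swap by (subst L_assoc; ((rule typing | simp only: strict_monoidal)+)?)+
  also have "\<dots> = mon X J ;; (Fmor (prodm X J (idC X) (\<delta> J)) ;; Fmor (prodm (X \<times>\<^sub>C J) J (C_swap D X J) (idC J)))
      ;; (mon_inv (J \<times>\<^sub>C X) J ;; (mon_inv J X \<otimes> idL (Fob J)) ;; (idL (Fob J) \<otimes> mon X J))"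
    by (simp only: F_minv_nat[OF C_swap_typed[OF refl refl] C_id_hom], (subst L_assoc; ((rule typing | simp only: strict_monoidal)+)?)+)
  also have "\<dots> = mon X J ;; Fmor (dup_snd X J) ;; mon_inv J (X \<times>\<^sub>C J)"
    by (subst F_comp[symmetric]; ((rule typing | simp only: strict_monoidal)+)?) (simp only: mon C_diag_swap)
  finally show ?thesis .
qed

lemma F_m_p2: "mon X J ;; Fmor (\<pi>\<^sub>2 X J) = discard X \<otimes> idL (Fob J)"
  unfolding F_minv_discard_left[symmetric]
  by (subst L_assoc[symmetric]; ((rule typing | simp only: strict_monoidal)+)?)
    (simp only: F_m_minv, rule L_id_left; (rule typing | simp only: strict_monoidal)+)

lemma copy_snd_discard_right: "copy_snd X J ;; (idL (Fob J) \<otimes> discard (X \<times>\<^sub>C J)) = discard X \<otimes> idL (Fob J)"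
proof -
  have "copy_snd X J ;; (idL (Fob J) \<otimes> discard (X \<times>\<^sub>C J)) = mon X J ;; (Fmor (dup_snd X J) ;; Fmor (\<pi>\<^sub>1 J (X \<times>\<^sub>C J)))"
    unfolding copy_snd_eq
    by (subst L_comp_assoc_subst[OF F_minv_discard_right]; ((rule typing | simp only: strict_monoidal)+)?)
      (rule L_assoc; (rule typing | simp only: strict_monoidal)+)
  also have "\<dots> = discard X \<otimes> idL (Fob J)"
    by (simp only: F_comp[symmetric, OF C_pair_typed[OF C_p2_hom C_id_hom refl refl refl] C_p1_hom] dup_snd_p1 F_m_p2)
  finally show ?thesis .
qed

lemma copy_snd_discard_left: "copy_snd X J ;; (discard J \<otimes> idL (Fob (X \<times>\<^sub>C J))) = mon X J"
proof -
  have "copy_snd X J ;; (discard J \<otimes> idL (Fob (X \<times>\<^sub>C J))) = mon X J ;; (Fmor (dup_snd X J) ;; Fmor (\<pi>\<^sub>2 J (X \<times>\<^sub>C J)))"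
    unfolding copy_snd_eq
    by (subst L_comp_assoc_subst[OF F_minv_discard_left]; ((rule typing | simp only: strict_monoidal)+)?)
      (rule L_assoc; (rule typing | simp only: strict_monoidal)+)
  also have "\<dots> = mon X J"
    by (simp only: F_comp[symmetric, OF C_pair_typed[OF C_p2_hom C_id_hom refl refl refl] C_p2_hom] dup_snd_p2 F_id)
      (rule L_id_right; (rule typing | simp only: strict_monoidal)+)
  finally show ?thesis .
qed

lemma copy_snd_copy_as_F: "copy_snd X J ;; (idL (Fob J) \<otimes> copy (X \<times>\<^sub>C J)) =
  mon X J ;; Fmor (dup_snd X J \<bullet> prodm J (X \<times>\<^sub>C J) (idC J) (\<delta> (X \<times>\<^sub>C J))) ;; mon_inv J (X \<times>\<^sub>C J \<times>\<^sub>C X \<times>\<^sub>C J) ;; (idL (Fob J) \<otimes> mon_inv (X \<times>\<^sub>C J) (X \<times>\<^sub>C J))"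
  apply (subst copy_snd_eq)
  apply (subst ls_c_def)
  apply (subst L_tensm_comp_right'; ((rule typing | simp only: strict_monoidal)+)?)
  apply (subst F_id_tensm_left)
  apply (subst L_assoc[symmetric]; ((rule typing | simp only: strict_monoidal)+)?)+
  apply (subst L_comp_assoc_subst[OF F_minv_nat]; ((rule typing | simp only: strict_monoidal)+)?)
  apply (subst L_assoc[symmetric]; ((rule typing | simp only: strict_monoidal)+)?)+
  apply (subst L_comp_assoc_subst[OF F_comp[symmetric]]; ((rule typing | simp only: strict_monoidal)+)?)
  apply ((rule refl | simp only: strict_monoidal)?)
  done

lemma copy_copy_snd_as_F:
  "(copy X \<otimes> idL (Fob J)) ;; (idL (Fob X) \<otimes> copy_snd X J) ;; (copy_snd X J \<otimes> idL (Fob (X \<times>\<^sub>C J)))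
   = mon X J ;; Fmor (prodm X J (\<delta> X) (idC J) \<bullet> prodm X (X \<times>\<^sub>C J) (idC X) (dup_snd X J)
                       \<bullet> prodm (X \<times>\<^sub>C J) (X \<times>\<^sub>C J) (dup_snd X J) (idC (X \<times>\<^sub>C J)))
     ;; mon_inv J (X \<times>\<^sub>C J \<times>\<^sub>C X \<times>\<^sub>C J) ;; (idL (Fob J) \<otimes> mon_inv (X \<times>\<^sub>C J) (X \<times>\<^sub>C J))"
proof -
  have "(copy X \<otimes> idL (Fob J)) ;; (idL (Fob X) \<otimes> copy_snd X J) ;; (copy_snd X J \<otimes> idL (Fob (X \<times>\<^sub>C J)))
      = mon X J ;; Fmor (prodm X J (\<delta> X) (idC J)) ;; mon_inv X (X \<times>\<^sub>C J) ;; (idL (Fob X) \<otimes> Fmor (dup_snd X J))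
        ;; (idL (Fob X) \<otimes> mon_inv J (X \<times>\<^sub>C J)) ;; (mon X J \<otimes> idL (Fob (X \<times>\<^sub>C J)))
        ;; (Fmor (dup_snd X J) \<otimes> idL (Fob (X \<times>\<^sub>C J))) ;; (mon_inv J (X \<times>\<^sub>C J) \<otimes> idL (Fob (X \<times>\<^sub>C J)))"
    unfolding copy_snd_eq ls_c_def
    apply (subst L_tensm_comp_left; ((rule typing | simp only: strict_monoidal)+)?)
    apply (subst F_id_tensm_right, subst F_tensm_eq; ((rule typing | simp only: strict_monoidal)+)?)
    apply (subst L_tensm_comp_right'; ((rule typing | simp only: strict_monoidal)+)?)+
    apply (subst L_tensm_comp_left; ((rule typing | simp only: strict_monoidal)+)?)+
    apply (subst L_assoc[symmetric]; ((rule typing | simp only: strict_monoidal)+)?)+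
    apply (subst L_comp_assoc_subst[OF F_minv_assoc]; ((rule typing | simp only: strict_monoidal)+)?)
    apply (subst L_assoc[symmetric]; ((rule typing | simp only: strict_monoidal)+)?)+
    apply (subst L_comp_assoc_subst[OF L_tensm_inverse_right[OF F_minv_typed F_m_typed F_minv_m]]; ((rule typing | simp only: strict_monoidal)+)?)
    apply (subst L_id_right'; ((rule typing | simp only: strict_monoidal)+)?)
    done
  also have "\<dots> = mon X J ;; Fmor (prodm X J (\<delta> X) (idC J)) ;; Fmor (prodm X (X \<times>\<^sub>C J) (idC X) (dup_snd X J))
        ;; mon_inv (X \<times>\<^sub>C J) (X \<times>\<^sub>C J) ;; (Fmor (dup_snd X J) \<otimes> idL (Fob (X \<times>\<^sub>C J)))
        ;; (mon_inv J (X \<times>\<^sub>C J) \<otimes> idL (Fob (X \<times>\<^sub>C J)))"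
    apply (subst F_id_tensm_left)
    apply (subst L_comp_assoc_subst[OF F_minv_nat]; ((rule typing | simp only: strict_monoidal)+)?)
    apply (subst L_assoc[symmetric]; ((rule typing | simp only: strict_monoidal)+)?)+
    apply (subst L_comp_assoc_subst[OF F_minv_assoc[symmetric]]; ((rule typing | simp only: strict_monoidal)+)?)
    apply (subst L_assoc[symmetric]; ((rule typing | simp only: strict_monoidal)+)?)+
    apply (subst L_comp_assoc_subst[OF L_tensm_inverse_left[OF F_minv_typed F_m_typed F_minv_m]]; ((rule typing | simp only: strict_monoidal)+)?)
    apply (subst L_id_right'; ((rule typing | simp only: strict_monoidal)+)?)
    done
  also have "\<dots> = mon X J ;; Fmor (prodm X J (\<delta> X) (idC J)) ;; Fmor (prodm X (X \<times>\<^sub>C J) (idC X) (dup_snd X J))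
        ;; Fmor (prodm (X \<times>\<^sub>C J) (X \<times>\<^sub>C J) (dup_snd X J) (idC (X \<times>\<^sub>C J)))
        ;; mon_inv J (X \<times>\<^sub>C J \<times>\<^sub>C X \<times>\<^sub>C J) ;; (idL (Fob J) \<otimes> mon_inv (X \<times>\<^sub>C J) (X \<times>\<^sub>C J))"
    apply (subst F_id_tensm_right)
    apply (subst L_comp_assoc_subst[OF F_minv_nat]; ((rule typing | simp only: strict_monoidal)+)?)
    apply (subst L_assoc[symmetric]; ((rule typing | simp only: strict_monoidal)+)?)+
    apply (subst L_comp_assoc_subst[OF F_minv_assoc]; ((rule typing | simp only: strict_monoidal)+)?)
    apply (subst L_assoc[symmetric]; ((rule typing | simp only: strict_monoidal)+)?)+
    apply ((rule refl | simp only: strict_monoidal)?)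
    done
  also have "\<dots> = mon X J ;; Fmor (prodm X J (\<delta> X) (idC J) \<bullet> prodm X (X \<times>\<^sub>C J) (idC X) (dup_snd X J)
                       \<bullet> prodm (X \<times>\<^sub>C J) (X \<times>\<^sub>C J) (dup_snd X J) (idC (X \<times>\<^sub>C J)))
     ;; mon_inv J (X \<times>\<^sub>C J \<times>\<^sub>C X \<times>\<^sub>C J) ;; (idL (Fob J) \<otimes> mon_inv (X \<times>\<^sub>C J) (X \<times>\<^sub>C J))"
    by ((subst F_comp; ((rule typing | simp only: strict_monoidal)+)?)+, (subst L_assoc[symmetric]; ((rule typing | simp only: strict_monoidal)+)?)+)
  finally show ?thesis .
qed

lemma copy_snd_copy:
  "copy_snd X J ;; (idL (Fob J) \<otimes> copy (X \<times>\<^sub>C J))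
   = (copy X \<otimes> idL (Fob J)) ;; (idL (Fob X) \<otimes> copy_snd X J) ;; (copy_snd X J \<otimes> idL (Fob (X \<times>\<^sub>C J)))"
  by (simp only: copy_snd_copy_as_F copy_copy_snd_as_F dup_snd_diag)

lemma copy_copy_snd_discard: "(copy X \<otimes> idL (Fob J)) ;; (idL (Fob X) \<otimes> copy_snd X J) ;; ((discard X \<otimes> discard J) \<otimes> idL (Fob (X \<times>\<^sub>C J))) = mon X J"
  apply (subst L_tensm_assoc[of "discard X"]; ((rule typing | simp only: strict_monoidal)+)?)
  apply (subst L_comp_assoc_subst[OF L_tensm_comp[symmetric]]; ((rule typing | simp only: strict_monoidal)+)?)
  apply (subst copy_snd_discard_left)
  apply (subst L_id_left'; ((rule typing | simp only: strict_monoidal)+)?)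
  apply (subst L_tensm_split[of "discard X" _ _ "mon X J"]; ((rule typing | simp only: strict_monoidal)+)?)
  apply (subst L_tensm_unit_left; ((rule typing | simp only: strict_monoidal)+)?)
  apply (subst L_assoc[symmetric]; ((rule typing | simp only: strict_monoidal)+)?)
  apply (subst L_tensm_id[symmetric])
  apply (subst L_tensm_assoc[symmetric, of "discard X"]; ((rule typing | simp only: strict_monoidal)+)?)
  apply (subst L_tensm_comp[symmetric, of "copy X"]; ((rule typing | simp only: strict_monoidal)+)?)
  apply (subst copy_discard_left)
  apply (subst L_id_left'; ((rule typing | simp only: strict_monoidal)+)?)
  apply (subst L_tensm_id)
  apply (subst L_id_left'; ((rule typing | simp only: strict_monoidal)+)?)
  done

section \<open>Fibres as co-Kleisli categories\<close>

text \<open>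
  The second components of composition in a fibre, of Sigma_mor and of reindex_mor along \<pi>1
  (see ls_comp_fib, Sigma_mor_fib and reindex_mor_fib).
\<close>

abbreviation cokl_comp :: "'x \<Rightarrow> 'l \<Rightarrow> 'g \<Rightarrow> 'g \<Rightarrow> 'g" where
  "cokl_comp Y A u v \<equiv> (copy Y \<otimes> idL A) ;; (idL (Fob Y) \<otimes> u) ;; v"

abbreviation Sigma_map :: "'x \<Rightarrow> 'x \<Rightarrow> 'l \<Rightarrow> 'g \<Rightarrow> 'g" where
  "Sigma_map X J A u \<equiv> (copy_snd X J \<otimes> idL A) ;; (idL (Fob J) \<otimes> u)"

abbreviation reindex_map :: "'x \<Rightarrow> 'x \<Rightarrow> 'l \<Rightarrow> 'g \<Rightarrow> 'g" where
  "reindex_map X J A v \<equiv> (Fmor (\<pi>\<^sub>1 X J) \<otimes> idL A) ;; v"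

lemma Sigma_map_id: "Sigma_map X J A (discard (X \<times>\<^sub>C J) \<otimes> idL A) = discard X \<otimes> idL (Fob J \<odot> A)"
  apply (subst L_tensm_assoc[symmetric]; ((rule typing | simp only: strict_monoidal)+)?)
  apply (subst L_tensm_comp[symmetric]; ((rule typing | simp only: strict_monoidal)+)?)
  apply (subst copy_snd_discard_right)
  apply (subst L_id_left'; ((rule typing | simp only: strict_monoidal)+)?)
  apply (subst L_tensm_assoc; ((rule typing | simp only: strict_monoidal)+)?)
  apply (subst L_tensm_id)
  apply ((rule refl | simp only: strict_monoidal)?)
  done

lemma Sigma_map_comp:
  assumes [typing]: "u \<in> L_hom D (Fob (X \<times>\<^sub>C J) \<odot> A) B" "v \<in> L_hom D (Fob (X \<times>\<^sub>C J) \<odot> B) C"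
  shows "Sigma_map X J A (cokl_comp (X \<times>\<^sub>C J) A u v)
    = cokl_comp X (Fob J \<odot> A) (Sigma_map X J A u) (Sigma_map X J B v)"
proof -
  let ?common = "(copy X \<otimes> idL (Fob J \<odot> A)) ;; (idL (Fob X) \<otimes> (copy_snd X J \<otimes> idL A))
    ;; (copy_snd X J \<otimes> idL (Fob (X \<times>\<^sub>C J) \<odot> A)) ;; (idL (Fob J \<odot> Fob (X \<times>\<^sub>C J)) \<otimes> u) ;; (idL (Fob J) \<otimes> v)"
  have "Sigma_map X J A (cokl_comp (X \<times>\<^sub>C J) A u v) = ?common"
    apply (subst L_tensm_comp_right'; ((rule typing | simp only: strict_monoidal)+)?)+
    apply (subst L_assoc[symmetric]; ((rule typing | simp only: strict_monoidal)+)?)+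
    apply (subst L_tensm_assoc[symmetric, of "idL (Fob J)" _ _ "copy (X \<times>\<^sub>C J)"]; ((rule typing | simp only: strict_monoidal)+)?)
    apply (subst L_tensm_comp[symmetric, of "copy_snd X J"]; ((rule typing | simp only: strict_monoidal)+)?)
    apply (subst copy_snd_copy)
    apply (subst L_id_left'; ((rule typing | simp only: strict_monoidal)+)?)
    apply (subst L_tensm_comp_left'; ((rule typing | simp only: strict_monoidal)+)?)+
    apply (subst L_tensm_assoc[of "copy X"]; ((rule typing | simp only: strict_monoidal)+)?)
    apply (subst L_tensm_assoc[of "idL (Fob X)"]; ((rule typing | simp only: strict_monoidal)+)?)
    apply (subst L_tensm_assoc[of "copy_snd X J"]; ((rule typing | simp only: strict_monoidal)+)?)
    apply (subst L_tensm_assoc[symmetric, of "idL (Fob J)" _ _ "idL (Fob (X \<times>\<^sub>C J))" _ _ u]; ((rule typing | simp only: strict_monoidal)+)?)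
    apply (subst L_tensm_id)+
    apply ((rule refl | simp only: strict_monoidal)?)
    done
  moreover have "cokl_comp X (Fob J \<odot> A) (Sigma_map X J A u) (Sigma_map X J B v) = ?common"
    apply (subst L_tensm_comp_right'[of "copy_snd X J \<otimes> idL A"]; ((rule typing | simp only: strict_monoidal)+)?)
    apply (subst L_assoc[symmetric]; ((rule typing | simp only: strict_monoidal)+)?)+
    apply (subst L_tensm_assoc[symmetric, of "idL (Fob X)" _ _ "idL (Fob J)" _ _ u]; ((rule typing | simp only: strict_monoidal)+)?)
    apply (subst L_tensm_id)
    apply (subst L_comp_assoc_subst[OF L_tensm_interchange]; ((rule typing | simp only: strict_monoidal)+)?)
    apply (subst L_assoc[symmetric]; ((rule typing | simp only: strict_monoidal)+)?)+
    apply ((rule refl | simp only: strict_monoidal)?)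
    done
  ultimately show ?thesis
    by simp
qed

lemma reindex_map_id: "reindex_map X J A (discard X \<otimes> idL A) = discard (X \<times>\<^sub>C J) \<otimes> idL A"
  by (subst L_tensm_comp[symmetric]; ((rule typing | simp only: strict_monoidal)+)?)
    (simp only: discard_nat[OF C_p1_hom] L_id_left[OF L_id_hom])

lemma copy_reindex:
  "(copy (X \<times>\<^sub>C J) \<otimes> idL A) ;; (idL (Fob (X \<times>\<^sub>C J)) \<otimes> (Fmor (\<pi>\<^sub>1 X J) \<otimes> idL A)) ;; (Fmor (\<pi>\<^sub>1 X J) \<otimes> idL (Fob X \<odot> A))
   = (Fmor (\<pi>\<^sub>1 X J) \<otimes> idL A) ;; (copy X \<otimes> idL A)"
  apply (subst L_tensm_assoc[symmetric]; ((rule typing | simp only: strict_monoidal)+)?)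
  apply (subst L_tensm_id[symmetric])
  apply (subst L_tensm_assoc[symmetric]; ((rule typing | simp only: strict_monoidal)+)?)
  apply (subst L_tensm_comp[symmetric]; ((rule typing | simp only: strict_monoidal)+)?)+
  apply (subst L_id_left'; ((rule typing | simp only: strict_monoidal)+)?)+
  apply (subst L_assoc; ((rule typing | simp only: strict_monoidal)+)?)
  apply (subst L_tensm_comp[symmetric, of "idL (Fob (X \<times>\<^sub>C J))"]; ((rule typing | simp only: strict_monoidal)+)?)
  apply (subst L_id_left' L_id_right'; ((rule typing | simp only: strict_monoidal)+)?)+
  apply (subst copy_nat; ((rule typing | simp only: strict_monoidal)+)?)
  apply ((rule refl | simp only: strict_monoidal)?)
  done

lemma reindex_map_comp:
  assumes [typing]: "u \<in> L_hom D (Fob X \<odot> A) B" "v \<in> L_hom D (Fob X \<odot> B) C"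
  shows "reindex_map X J A (cokl_comp X A u v)
    = cokl_comp (X \<times>\<^sub>C J) A (reindex_map X J A u) (reindex_map X J B v)"
  apply (subst L_tensm_comp_right'[of "Fmor (\<pi>\<^sub>1 X J) \<otimes> idL A"]; ((rule typing | simp only: strict_monoidal)+)?)
  apply (subst L_assoc[symmetric]; ((rule typing | simp only: strict_monoidal)+)?)+
  apply (subst L_comp_assoc_subst[OF L_tensm_interchange]; ((rule typing | simp only: strict_monoidal)+)?)
  apply (subst L_assoc[symmetric]; ((rule typing | simp only: strict_monoidal)+)?)+
  apply (subst copy_reindex)
  apply ((rule refl | simp only: strict_monoidal)?)
  done

lemma F_minv_copy_snd: "mon_inv X J ;; copy_snd X J = copy (X \<times>\<^sub>C J) ;; (Fmor (\<pi>\<^sub>2 X J) \<otimes> idL (Fob (X \<times>\<^sub>C J)))"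
proof -
  have "mon_inv X J ;; copy_snd X J = Fmor (dup_snd X J) ;; mon_inv J (X \<times>\<^sub>C J)"
    unfolding copy_snd_eq
    by ((subst L_assoc[symmetric]; ((rule typing | simp only: strict_monoidal)+)?)+, simp only: F_minv_m)
      (subst L_id_left'; ((rule typing | simp only: strict_monoidal)+)?)
  also have "\<dots> = copy (X \<times>\<^sub>C J) ;; (Fmor (\<pi>\<^sub>2 X J) \<otimes> idL (Fob (X \<times>\<^sub>C J)))"
    by (simp only: F_id_tensm_right copy_F_tensm[OF C_p2_hom C_id_hom])
  finally show ?thesis .
qed

lemma copy_projections_copy_snd:
  "copy (X \<times>\<^sub>C J) ;; (Fmor (\<pi>\<^sub>1 X J) \<otimes> Fmor (\<pi>\<^sub>2 X J)) ;; copy_snd X J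
   = copy (X \<times>\<^sub>C J) ;; (Fmor (\<pi>\<^sub>2 X J) \<otimes> idL (Fob (X \<times>\<^sub>C J)))"
  by (simp only: copy_F_tensm[OF C_p1_hom C_p2_hom] C_pair_p1_p2 F_id L_id_left[OF F_minv_typed[OF refl refl]]
      F_minv_copy_snd)

lemma cokl_unit_natural:
  assumes [typing]: "u \<in> L_hom D (Fob (X \<times>\<^sub>C J) \<odot> A) B"
  shows "cokl_comp (X \<times>\<^sub>C J) A u (Fmor (\<pi>\<^sub>2 X J) \<otimes> idL B)
    = cokl_comp (X \<times>\<^sub>C J) A (Fmor (\<pi>\<^sub>2 X J) \<otimes> idL A) (reindex_map X J (Fob J \<odot> A) (Sigma_map X J A u))"
proof -
  have core: "copy (X \<times>\<^sub>C J) ;; (idL (Fob (X \<times>\<^sub>C J)) \<otimes> Fmor (\<pi>\<^sub>2 X J)) ;; (Fmor (\<pi>\<^sub>1 X J) \<otimes> idL (Fob J)) ;; copy_snd X J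
      = copy (X \<times>\<^sub>C J) ;; (Fmor (\<pi>\<^sub>2 X J) \<otimes> idL (Fob (X \<times>\<^sub>C J)))"
    apply (subst L_comp_assoc_subst[OF L_tensm_comp[symmetric]]; ((rule typing | simp only: strict_monoidal)+)?)
    apply (subst L_id_left' L_id_right'; ((rule typing | simp only: strict_monoidal)+)?)+
    apply (rule copy_projections_copy_snd)
    done
  have core_A: "(copy (X \<times>\<^sub>C J) \<otimes> idL A) ;; (idL (Fob (X \<times>\<^sub>C J)) \<otimes> (Fmor (\<pi>\<^sub>2 X J) \<otimes> idL A))
      ;; (Fmor (\<pi>\<^sub>1 X J) \<otimes> idL (Fob J \<odot> A)) ;; (copy_snd X J \<otimes> idL A)
    = (copy (X \<times>\<^sub>C J) \<otimes> idL A) ;; (Fmor (\<pi>\<^sub>2 X J) \<otimes> idL (Fob (X \<times>\<^sub>C J) \<odot> A))"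
    apply (subst L_tensm_id[symmetric])+
    apply (subst L_tensm_assoc[symmetric]; ((rule typing | simp only: strict_monoidal)+)?)+
    apply (subst L_tensm_comp[symmetric, of "copy (X \<times>\<^sub>C J)"]; ((rule typing | simp only: strict_monoidal)+)?)+
    apply (subst L_id_left'; ((rule typing | simp only: strict_monoidal)+)?)+
    apply (subst L_tensm_comp[symmetric, of "copy (X \<times>\<^sub>C J) ;; (idL (Fob (X \<times>\<^sub>C J)) \<otimes> Fmor (\<pi>\<^sub>2 X J))"]; ((rule typing | simp only: strict_monoidal)+)?)
    apply (subst L_id_left'; ((rule typing | simp only: strict_monoidal)+)?)
    apply (subst L_tensm_comp[symmetric, of "copy (X \<times>\<^sub>C J) ;; (idL (Fob (X \<times>\<^sub>C J)) \<otimes> Fmor (\<pi>\<^sub>2 X J)) ;; (Fmor (\<pi>\<^sub>1 X J) \<otimes> idL (Fob J))"]; ((rule typing | simp only: strict_monoidal)+)?)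
    apply (subst L_id_left'; ((rule typing | simp only: strict_monoidal)+)?)
    apply (subst core)
    apply ((rule refl | simp only: strict_monoidal)?)
    done
  show ?thesis
    apply (subst L_assoc[symmetric]; ((rule typing | simp only: strict_monoidal)+)?)+
    apply (subst core_A)
    apply (subst L_comp_assoc_subst[OF L_tensm_interchange]; ((rule typing | simp only: strict_monoidal)+)?)
    apply (subst L_assoc[symmetric]; ((rule typing | simp only: strict_monoidal)+)?)+
    apply ((rule refl | simp only: strict_monoidal)?)
    done
qed

lemma Sigma_map_cokl_counit:
  assumes [typing]: "w \<in> L_hom D (Fob (X \<times>\<^sub>C J) \<odot> A) B"
  shows "cokl_comp X (Fob J \<odot> A) (Sigma_map X J A w) ((discard X \<otimes> discard J) \<otimes> idL B) = (mon X J \<otimes> idL A) ;; w"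
proof -
  have core_A: "(copy X \<otimes> idL (Fob J \<odot> A)) ;; (idL (Fob X) \<otimes> (copy_snd X J \<otimes> idL A))
      ;; ((discard X \<otimes> discard J) \<otimes> idL (Fob (X \<times>\<^sub>C J) \<odot> A)) = mon X J \<otimes> idL A"
    apply (subst L_tensm_id[symmetric])+
    apply (subst L_tensm_assoc[symmetric]; ((rule typing | simp only: strict_monoidal)+)?)+
    apply (subst L_tensm_comp[symmetric, of "copy X \<otimes> idL (Fob J)"]; ((rule typing | simp only: strict_monoidal)+)?)
    apply (subst L_id_left'; ((rule typing | simp only: strict_monoidal)+)?)
    apply (subst L_tensm_comp[symmetric, of "(copy X \<otimes> idL (Fob J)) ;; (idL (Fob X) \<otimes> copy_snd X J)"]; ((rule typing | simp only: strict_monoidal)+)?)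
    apply (subst L_id_left'; ((rule typing | simp only: strict_monoidal)+)?)
    apply (subst copy_copy_snd_discard)
    apply ((rule refl | simp only: strict_monoidal)?)
    done
  show ?thesis
    apply (subst L_tensm_comp_right'[of "copy_snd X J \<otimes> idL A"]; ((rule typing | simp only: strict_monoidal)+)?)
    apply (subst L_assoc[symmetric]; ((rule typing | simp only: strict_monoidal)+)?)+
    apply (subst L_tensm_assoc[symmetric, of "idL (Fob X)" _ _ "idL (Fob J)" _ _ w]; ((rule typing | simp only: strict_monoidal)+)?)
    apply (subst L_tensm_id)
    apply (subst L_comp_assoc_subst[OF L_tensm_interchange]; ((rule typing | simp only: strict_monoidal)+)?)
    apply (simp only: strict_monoidal)
    apply (subst L_tensm_unit_left; ((rule typing | simp only: strict_monoidal)+)?)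
    apply (subst L_assoc[symmetric]; ((rule typing | simp only: strict_monoidal)+)?)+
    apply (subst core_A[simplified strict_monoidal])
    apply ((rule refl | simp only: strict_monoidal)?)
    done
qed

lemma cokl_counit_natural:
  assumes [typing]: "v \<in> L_hom D (Fob X \<odot> A) B"
  shows "cokl_comp X (Fob J \<odot> A) (Sigma_map X J A (reindex_map X J A v)) ((discard X \<otimes> discard J) \<otimes> idL B)
    = cokl_comp X (Fob J \<odot> A) ((discard X \<otimes> discard J) \<otimes> idL A) v"
  apply (subst Sigma_map_cokl_counit; ((rule typing | simp only: strict_monoidal)+)?)
  apply (subst L_assoc[symmetric]; ((rule typing | simp only: strict_monoidal)+)?)
  apply (subst L_tensm_comp[symmetric, of "mon X J"]; ((rule typing | simp only: strict_monoidal)+)?)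
  apply (subst F_m_p1)
  apply (subst L_id_left'; ((rule typing | simp only: strict_monoidal)+)?)
  apply (subst L_tensm_id[symmetric])
  apply (subst L_tensm_assoc[symmetric, of "copy X"]; ((rule typing | simp only: strict_monoidal)+)?)
  apply (subst L_tensm_assoc[symmetric, of "idL (Fob X)"]; ((rule typing | simp only: strict_monoidal)+)?)
  apply (subst L_tensm_comp[symmetric, of "copy X \<otimes> idL (Fob J)"]; ((rule typing | simp only: strict_monoidal)+)?)
  apply (subst L_id_left'; ((rule typing | simp only: strict_monoidal)+)?)
  apply (subst L_tensm_assoc[symmetric, of "idL (Fob X)" _ _ "discard X"]; ((rule typing | simp only: strict_monoidal)+)?)
  apply (subst L_tensm_comp[symmetric, of "copy X"]; ((rule typing | simp only: strict_monoidal)+)?)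
  apply (subst copy_discard_right)
  apply (subst L_id_left'; ((rule typing | simp only: strict_monoidal)+)?)
  apply ((rule refl | simp only: strict_monoidal)?)
  done

lemma cokl_triangle_Sigma:
  "cokl_comp X (Fob J \<odot> A) (Sigma_map X J A (Fmor (\<pi>\<^sub>2 X J) \<otimes> idL A)) ((discard X \<otimes> discard J) \<otimes> idL (Fob J \<odot> A))
   = discard X \<otimes> idL (Fob J \<odot> A)"
  apply (subst Sigma_map_cokl_counit; ((rule typing | simp only: strict_monoidal)+)?)
  apply (subst L_tensm_comp[symmetric]; ((rule typing | simp only: strict_monoidal)+)?)
  apply (subst F_m_p2)
  apply (subst L_id_left'; ((rule typing | simp only: strict_monoidal)+)?)
  apply (subst L_tensm_assoc; ((rule typing | simp only: strict_monoidal)+)?)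
  apply (subst L_tensm_id)
  apply ((rule refl | simp only: strict_monoidal)?)
  done

lemma cokl_triangle_reindex:
  "cokl_comp (X \<times>\<^sub>C J) A (Fmor (\<pi>\<^sub>2 X J) \<otimes> idL A) (reindex_map X J (Fob J \<odot> A) ((discard X \<otimes> discard J) \<otimes> idL A))
   = discard (X \<times>\<^sub>C J) \<otimes> idL A"
  apply (subst L_tensm_id[symmetric, of "Fob J" A])
  apply (subst L_tensm_assoc[of "discard X"]; ((rule typing | simp only: strict_monoidal)+)?)
  apply (subst L_tensm_comp[symmetric, of "Fmor (\<pi>\<^sub>1 X J)"]; ((rule typing | simp only: strict_monoidal)+)?)
  apply (subst discard_nat; ((rule typing | simp only: strict_monoidal)+)?)
  apply (subst L_tensm_comp[symmetric, of "idL (Fob J)"]; ((rule typing | simp only: strict_monoidal)+)?)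
  apply (subst L_id_left'; ((rule typing | simp only: strict_monoidal)+)?)+
  apply (subst L_assoc; ((rule typing | simp only: strict_monoidal)+)?)
  apply (subst L_tensm_comp[symmetric, of "idL (Fob (X \<times>\<^sub>C J))"]; ((rule typing | simp only: strict_monoidal)+)?)
  apply (subst L_id_left'; ((rule typing | simp only: strict_monoidal)+)?)
  apply (subst L_tensm_comp[symmetric, of "Fmor (\<pi>\<^sub>2 X J)"]; ((rule typing | simp only: strict_monoidal)+)?)
  apply (subst discard_nat; ((rule typing | simp only: strict_monoidal)+)?)
  apply (subst L_id_left'; ((rule typing | simp only: strict_monoidal)+)?)
  apply (subst L_tensm_assoc[symmetric, of "discard (X \<times>\<^sub>C J)"]; ((rule typing | simp only: strict_monoidal)+)?)
  apply (subst L_tensm_comp[symmetric, of "copy (X \<times>\<^sub>C J)"]; ((rule typing | simp only: strict_monoidal)+)?)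
  apply (subst copy_discard_discard)
  apply (subst L_id_left'; ((rule typing | simp only: strict_monoidal)+)?)
  done

section \<open>The adjunction between Sigma and reindexing\<close>

lemma fib_homE:
  assumes "u \<in> fib_hom D Y A B"
  obtains v where "u = (idC Y, v)" "v \<in> L_hom D (Fob Y \<odot> A) B"
  using assms unfolding fib_hom_def ls_hom_def by auto

lemma fib_homI [typing]: "v \<in> L_hom D (Fob Y \<odot> A) B \<Longrightarrow> (idC Y, v) \<in> fib_hom D Y A B"
  unfolding fib_hom_def ls_hom_def by (simp add: C_id_hom)

lemma ls_comp_fib: "ls_comp D (Y, A) (idC Y, u) (idC Y, v) = (idC Y, cokl_comp Y A u v)"
  by (simp add: ls_comp_def C_id_left[OF C_id_hom] F_id)

lemma ls_id_fib: "ls_id D (Y, A) = (idC Y, discard Y \<otimes> idL A)"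
  by (simp add: ls_id_def)

lemma reindex_mor_fib: "reindex_mor D (\<pi>\<^sub>1 X J) Y (X, A) (idC X, v) = (idC Y, reindex_map X J A v)"
  by (simp add: reindex_mor_def)

lemma Sigma_mor_fib:
  assumes [typing]: "u \<in> L_hom D (Fob (X \<times>\<^sub>C J) \<odot> A) B"
  shows "Sigma_mor D X J (X \<times>\<^sub>C J, A) (idC (X \<times>\<^sub>C J), u) = (idC X, Sigma_map X J A u)"
  unfolding Sigma_mor_def copy_snd_def
  apply (simp only: fst_conv snd_conv prod.inject simp_thms)
  apply (subst L_tensm_comp_left'; ((rule typing | simp only: strict_monoidal)+)?)+
  apply (subst L_tensm_comp_right'; ((rule typing | simp only: strict_monoidal)+)?)
  apply (subst L_tensm_assoc[of "\<sigma> (Fob X) (Fob J)"]; ((rule typing | simp only: strict_monoidal)+)?)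
  apply (subst L_tensm_assoc[of "idL (Fob J)" _ _ "mon X J"]; ((rule typing | simp only: strict_monoidal)+)?)
  apply (subst L_tensm_id)
  apply (subst L_assoc[symmetric]; ((rule typing | simp only: strict_monoidal)+)?)+
  apply ((rule refl | simp only: strict_monoidal)?)
  done

lemma Sigma_unit_fib: "Sigma_unit D X J (X \<times>\<^sub>C J, A) = (idC (X \<times>\<^sub>C J), Fmor (\<pi>\<^sub>2 X J) \<otimes> idL A)"
  unfolding Sigma_unit_def
  apply (simp only: snd_conv prod.inject simp_thms)
  apply (subst L_tensm_id[symmetric])
  apply (subst L_tensm_assoc[symmetric]; ((rule typing | simp only: strict_monoidal)+)?)
  apply (subst L_tensm_comp[symmetric]; ((rule typing | simp only: strict_monoidal)+)?)
  apply (subst F_minv_discard_left)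
  apply (subst L_id_left'; ((rule typing | simp only: strict_monoidal)+)?)
  done

lemma Sigma_counit_fib: "Sigma_counit D X J (X, A) = (idC X, (discard X \<otimes> discard J) \<otimes> idL A)"
  by (simp add: Sigma_counit_def)

lemma Sigma_mor_fib_hom:
  assumes "u \<in> fib_hom D (X \<times>\<^sub>C J) A B"
  shows "Sigma_mor D X J (X \<times>\<^sub>C J, A) u \<in> fib_hom D X (Fob J \<odot> A) (Fob J \<odot> B)"
  using assms by (elim fib_homE) (simp add: Sigma_mor_fib, (rule typing | assumption | simp only: strict_monoidal)+)

lemma Sigma_mor_ls_id: "Sigma_mor D X J (X \<times>\<^sub>C J, A) (ls_id D (X \<times>\<^sub>C J, A)) = ls_id D (X, Fob J \<odot> A)"
  by (simp add: ls_id_fib Sigma_mor_fib[OF L_tensm_typed[OF discard_typed L_id_typed]] Sigma_map_id)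

lemma Sigma_mor_ls_comp:
  assumes "u \<in> fib_hom D (X \<times>\<^sub>C J) A B" "v \<in> fib_hom D (X \<times>\<^sub>C J) B C"
  shows "Sigma_mor D X J (X \<times>\<^sub>C J, A) (ls_comp D (X \<times>\<^sub>C J, A) u v)
    = ls_comp D (X, Fob J \<odot> A) (Sigma_mor D X J (X \<times>\<^sub>C J, A) u) (Sigma_mor D X J (X \<times>\<^sub>C J, B) v)"
  using assms
proof (elim fib_homE)
  fix u' v' assume [simp]: "u = (idC (X \<times>\<^sub>C J), u')" "v = (idC (X \<times>\<^sub>C J), v')"
    and u' [typing]: "u' \<in> L_hom D (Fob (X \<times>\<^sub>C J) \<odot> A) B"
    and v' [typing]: "v' \<in> L_hom D (Fob (X \<times>\<^sub>C J) \<odot> B) C"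
  have uv: "cokl_comp (X \<times>\<^sub>C J) A u' v' \<in> L_hom D (Fob (X \<times>\<^sub>C J) \<odot> A) C"
    by (rule typing | simp only: strict_monoidal)+
  show ?thesis
    by (simp add: ls_comp_fib Sigma_mor_fib[OF u'] Sigma_mor_fib[OF v'] Sigma_mor_fib[OF uv] Sigma_map_comp[OF u' v'])
qed

lemma reindex_mor_fib_hom:
  assumes "v \<in> fib_hom D X A B"
  shows "reindex_mor D (\<pi>\<^sub>1 X J) (X \<times>\<^sub>C J) (X, A) v \<in> fib_hom D (X \<times>\<^sub>C J) A B"
  using assms by (elim fib_homE) (simp add: reindex_mor_fib, (rule typing | assumption | simp only: strict_monoidal)+)

lemma reindex_mor_ls_id: "reindex_mor D (\<pi>\<^sub>1 X J) (X \<times>\<^sub>C J) (X, A) (ls_id D (X, A)) = ls_id D (X \<times>\<^sub>C J, A)"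
  by (simp add: ls_id_fib reindex_mor_fib reindex_map_id)

lemma reindex_mor_ls_comp:
  assumes "u \<in> fib_hom D X A B" "v \<in> fib_hom D X B C"
  shows "reindex_mor D (\<pi>\<^sub>1 X J) (X \<times>\<^sub>C J) (X, A) (ls_comp D (X, A) u v)
    = ls_comp D (X \<times>\<^sub>C J, A) (reindex_mor D (\<pi>\<^sub>1 X J) (X \<times>\<^sub>C J) (X, A) u) (reindex_mor D (\<pi>\<^sub>1 X J) (X \<times>\<^sub>C J) (X, B) v)"
  using assms by (elim fib_homE) (simp add: ls_comp_fib reindex_mor_fib reindex_map_comp)

lemma Sigma_unit_fib_hom: "Sigma_unit D X J (X \<times>\<^sub>C J, A) \<in> fib_hom D (X \<times>\<^sub>C J) A (Fob J \<odot> A)"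
  unfolding Sigma_unit_fib by (rule typing | simp only: strict_monoidal)+

lemma Sigma_unit_natural:
  assumes "u \<in> fib_hom D (X \<times>\<^sub>C J) A B"
  shows "ls_comp D (X \<times>\<^sub>C J, A) u (Sigma_unit D X J (X \<times>\<^sub>C J, B))
    = ls_comp D (X \<times>\<^sub>C J, A) (Sigma_unit D X J (X \<times>\<^sub>C J, A))
        (reindex_mor D (\<pi>\<^sub>1 X J) (X \<times>\<^sub>C J) (X, Fob J \<odot> A) (Sigma_mor D X J (X \<times>\<^sub>C J, A) u))"
  using assms
proof (elim fib_homE)
  fix u' assume "u = (idC (X \<times>\<^sub>C J), u')" and u': "u' \<in> L_hom D (Fob (X \<times>\<^sub>C J) \<odot> A) B"
  then show ?thesis
    by (simp add: Sigma_unit_fib ls_comp_fib reindex_mor_fib Sigma_mor_fib[OF u'] cokl_unit_natural[OF u'])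
qed

lemma Sigma_counit_fib_hom: "Sigma_counit D X J (X, A) \<in> fib_hom D X (Fob J \<odot> A) A"
  unfolding Sigma_counit_fib by (rule typing | simp only: strict_monoidal)+

lemma Sigma_counit_natural:
  assumes "v \<in> fib_hom D X A B"
  shows "ls_comp D (X, Fob J \<odot> A) (Sigma_mor D X J (X \<times>\<^sub>C J, A) (reindex_mor D (\<pi>\<^sub>1 X J) (X \<times>\<^sub>C J) (X, A) v))
      (Sigma_counit D X J (X, B))
    = ls_comp D (X, Fob J \<odot> A) (Sigma_counit D X J (X, A)) v"
  using assms
proof (elim fib_homE)
  fix v' assume "v = (idC X, v')" and v' [typing]: "v' \<in> L_hom D (Fob X \<odot> A) B"
  have "reindex_map X J A v' \<in> L_hom D (Fob (X \<times>\<^sub>C J) \<odot> A) B"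
    by (rule typing | simp only: strict_monoidal)+
  with \<open>v = (idC X, v')\<close> show ?thesis
    by (simp add: Sigma_counit_fib ls_comp_fib reindex_mor_fib Sigma_mor_fib cokl_counit_natural[OF v'])
qed

lemma Sigma_triangle:
  "ls_comp D (X, Fob J \<odot> A) (Sigma_mor D X J (X \<times>\<^sub>C J, A) (Sigma_unit D X J (X \<times>\<^sub>C J, A)))
     (Sigma_counit D X J (X, Fob J \<odot> A))
   = ls_id D (X, Fob J \<odot> A)"
proof -
  have "Fmor (\<pi>\<^sub>2 X J) \<otimes> idL A \<in> L_hom D (Fob (X \<times>\<^sub>C J) \<odot> A) (Fob J \<odot> A)"
    by (rule typing | simp only: strict_monoidal)+
  then show ?thesis
    by (simp add: Sigma_unit_fib Sigma_counit_fib Sigma_mor_fib ls_comp_fib ls_id_fib cokl_triangle_Sigma)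
qed

lemma reindex_triangle:
  "ls_comp D (X \<times>\<^sub>C J, A) (Sigma_unit D X J (X \<times>\<^sub>C J, A))
     (reindex_mor D (\<pi>\<^sub>1 X J) (X \<times>\<^sub>C J) (X, Fob J \<odot> A) (Sigma_counit D X J (X, A)))
   = ls_id D (X \<times>\<^sub>C J, A)"
  by (simp add: Sigma_unit_fib Sigma_counit_fib reindex_mor_fib ls_comp_fib ls_id_fib cokl_triangle_reindex)

end

theorem proposition3p23:
  fixes D :: "('x, 'f, 'l, 'g, 'z) lnl_data_scheme" and X J :: 'x
  assumes "lnl_adjunction D"
  defines "XJ \<equiv> C_prod D X J"
  shows
    \<comment> \<open>\<Sigma>_(X,J) is a functor LS(C)_(X\<times>J) \<rightarrow> LS(C)_X\<close>
    "(\<forall>A B u. u \<in> fib_hom D XJ A B \<longrightarrow>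
        Sigma_mor D X J (XJ, A) u \<in> fib_hom D X (snd (Sigma_ob D X J (XJ, A))) (snd (Sigma_ob D X J (XJ, B))))
   \<and> (\<forall>A. Sigma_mor D X J (XJ, A) (ls_id D (XJ, A)) = ls_id D (Sigma_ob D X J (XJ, A)))
   \<and> (\<forall>A B C u v. u \<in> fib_hom D XJ A B \<longrightarrow> v \<in> fib_hom D XJ B C \<longrightarrow>
        Sigma_mor D X J (XJ, A) (ls_comp D (XJ, A) u v)
        = ls_comp D (Sigma_ob D X J (XJ, A)) (Sigma_mor D X J (XJ, A) u) (Sigma_mor D X J (XJ, B) v))
    \<comment> \<open>\<pi>1^* is a functor LS(C)_X \<rightarrow> LS(C)_(X\<times>J)\<close>
   \<and> (\<forall>A B v. v \<in> fib_hom D X A B \<longrightarrow>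
        reindex_mor D (C_p1 D X J) XJ (X, A) v
          \<in> fib_hom D XJ (snd (reindex_ob XJ (X, A))) (snd (reindex_ob XJ (X, B))))
   \<and> (\<forall>A. reindex_mor D (C_p1 D X J) XJ (X, A) (ls_id D (X, A)) = ls_id D (reindex_ob XJ (X, A)))
   \<and> (\<forall>A B C u v. u \<in> fib_hom D X A B \<longrightarrow> v \<in> fib_hom D X B C \<longrightarrow>
        reindex_mor D (C_p1 D X J) XJ (X, A) (ls_comp D (X, A) u v)
        = ls_comp D (reindex_ob XJ (X, A)) (reindex_mor D (C_p1 D X J) XJ (X, A) u)
                                            (reindex_mor D (C_p1 D X J) XJ (X, B) v))
    \<comment> \<open>\<nu> : Id \<Rightarrow> \<Sigma>;\<pi>1^* is a natural transformation\<close>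
   \<and> (\<forall>A. Sigma_unit D X J (XJ, A)
          \<in> fib_hom D XJ A (snd (reindex_ob XJ (Sigma_ob D X J (XJ, A)))))
   \<and> (\<forall>A B u. u \<in> fib_hom D XJ A B \<longrightarrow>
        ls_comp D (XJ, A) u (Sigma_unit D X J (XJ, B))
        = ls_comp D (XJ, A) (Sigma_unit D X J (XJ, A))
            (reindex_mor D (C_p1 D X J) XJ (Sigma_ob D X J (XJ, A)) (Sigma_mor D X J (XJ, A) u)))
    \<comment> \<open>\<mu> : \<pi>1^*;\<Sigma> \<Rightarrow> Id is a natural transformation\<close>
   \<and> (\<forall>A. Sigma_counit D X J (X, A)
          \<in> fib_hom D X (snd (Sigma_ob D X J (reindex_ob XJ (X, A)))) A)
   \<and> (\<forall>A B v. v \<in> fib_hom D X A B \<longrightarrow>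
        ls_comp D (Sigma_ob D X J (reindex_ob XJ (X, A)))
          (Sigma_mor D X J (reindex_ob XJ (X, A)) (reindex_mor D (C_p1 D X J) XJ (X, A) v))
          (Sigma_counit D X J (X, B))
        = ls_comp D (Sigma_ob D X J (reindex_ob XJ (X, A))) (Sigma_counit D X J (X, A)) v)
    \<comment> \<open>triangle identities\<close>
   \<and> (\<forall>A. ls_comp D (Sigma_ob D X J (XJ, A))
          (Sigma_mor D X J (XJ, A) (Sigma_unit D X J (XJ, A)))
          (Sigma_counit D X J (Sigma_ob D X J (XJ, A)))
        = ls_id D (Sigma_ob D X J (XJ, A)))
   \<and> (\<forall>A. ls_comp D (reindex_ob XJ (X, A))
          (Sigma_unit D X J (reindex_ob XJ (X, A)))
          (reindex_mor D (C_p1 D X J) XJ (Sigma_ob D X J (reindex_ob XJ (X, A))) (Sigma_counit D X J (X, A)))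
        = ls_id D (reindex_ob XJ (X, A)))"
proof -
  interpret lnl_adjunction D by fact
  show ?thesis
    unfolding XJ_def Sigma_ob_def reindex_ob_def snd_conv
    by (simp add: Sigma_mor_fib_hom Sigma_mor_ls_id Sigma_mor_ls_comp reindex_mor_fib_hom reindex_mor_ls_id
        reindex_mor_ls_comp Sigma_unit_fib_hom Sigma_unit_natural Sigma_counit_fib_hom Sigma_counit_natural
        Sigma_triangle reindex_triangle)
qed

end
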